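(* Let $\Psi$ be a proof schema and $\gamma\in\mathbb N$. Then $\mathrm{PR}(\Psi\!\downarrow_\gamma)=\mathrm{PR}(\Psi)\!\downarrow_\gamma$.
   Context: **Language.** A two-sorted first-order language with sort $\omega$ (natural numbers) and sort $\iota$. It contains the constant function symbols $0:\omega$ and $s:\omega\to\omega$ (we write $t+1$ for $s(t)$; $\gamma\in\mathbb N$ also denotes the numeral $s^\gamma(0)$), further uninterpreted function and predicate symbols, and defined function and predicate symbols. Each defined function symbol $f$ comes with primitive recursive rewrite rules $f(0,\bar x)\to s$ and $f(s(y),\bar x)\to t[f(y,\bar x)]$, where $s,t$ do not contain $f$ and contain only defined symbols $g\prec f$ for a fixed irreflexive order $\prec$. Defined predicate symbols are analogous. $\mathcal E$ denotes these rules read as equations. **Calculi.** $\mathbf{LK}_{\mathcal E}$ is $\mathbf{LK}$ (axioms $A\vdash A$, $A$ atomic) plus the rule: from $S[t]$ infer $S[t']$ if $\mathcal E\models t=t'$. A proof link $(\varphi(a_1,\dots,a_m))$ above $S(a_1,\dots,a_m)$ (with $\varphi$ a proof symbol) is a $k$-proof link if $\mathrm{vars}(a_1)\subseteq\{k\}$. $\mathbf{LKS}_{\mathcal E}$ is $\mathbf{LK}_{\mathcal E}$ with proof links allowed as leaves. An $\mathbf{LKS}_{\mathcal E}$-proof is normal if it has no proof links and no defined symbols. **Proof schemata.** A proof schema pair for $\psi$ with sequent $S(n,\bar x)$ is a pair $(\pi,\nu(k))$ of $\mathbf{LKS}_{\mathcal E}$-proofs of $S(0,\bar x)$ and $S(k+1,\bar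 x)$, where $\pi$ has no proof links and $\nu(k)$ has only proof links $(\psi(k,\bar a))$ above $S(k,\bar a)$. A proof schema $\Psi=\langle(\pi_1,\nu_1(k)),\dots,(\pi_\alpha,\nu_\alpha(k))\rangle$ consists of pairs for $\psi_1,\dots,\psi_\alpha$, where the proofs of pair $\beta$ may additionally contain $k$-proof links to $\psi_\gamma$ for $\beta<\gamma$. The end-sequent of $\Psi$ is that of $\psi_1$. **Evaluation.** Proof links are rewritten by $(\psi_\beta(0,\bar x))\to\pi_\beta$ and $(\psi_\beta(k+1,\bar x))\to\nu_\beta(k)$. $\Psi\!\downarrow_\gamma$ is a normal form of the link $(\psi_1(\gamma,\bar x))$ under these rules plus the defined-symbol rules. **Configurations.** A configuration for an $\mathbf{LKS}_{\mathcal E}$-proof is a set $\Omega$ of formula occurrences of its end-sequent. End-sequent occurrences of $\pi_\beta$, $\nu_\beta(k)$ and of evaluations are identified. An $\Omega$-ancestor (resp. cut-ancestor) is an ancestor of an occurrence in $\Omega$ (resp. of a cut formula). **Projection terms.** Projection terms are built from sequents and terms $\mathrm{pr}^{\psi,\Omega}(a,\bar x)$ (one projection symbol for each proof symbol $\psi$ and configuration $\Omega$), using: - unary rule symbols $\rho$ (one per unary rule of $\mathbf{LKS}_{\mathcal E}$, with the choice of auxiliary formulas recorded); - unary symbols $w^{\Gamma\vdash\Delta}$ for sequents $\Gamma\vdash\Delta$; - binary $\oplus$; - binary $\otimes_\sigma$ for each binary rule $\sigma$. For an $\mathbf{LKS}_{\mathcal E}$-proof $\pi$ and configuration $\Omega$,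 define $\Xi_\rho(\pi,\Omega)$ over the inferences $\rho$ inductively: - axiom $S$: the term $S$; - proof link $(\psi(a,\bar x))$ above $S'$: $\mathrm{pr}^{\psi,\Omega'}(a,\bar x)$, where $\Omega'$ is the set of occurrences of $S'$ that are $\Omega$- or cut-ancestors; - unary $\rho$ with premise $\rho'$: $\Xi_{\rho'}$ if $\rho$ is the $\mathcal E$-rule or its auxiliary formulas are $\Omega$- or cut-ancestors, and otherwise $\rho(\Xi_{\rho'})$; - binary $\sigma$ with premises $\rho_1,\rho_2$: if the auxiliary formulas are $\Omega$- or cut-ancestors, $w^{\Gamma_2\vdash\Delta_2}(\Xi_{\rho_1})\oplus w^{\Gamma_1\vdash\Delta_1}(\Xi_{\rho_2})$, where $\Gamma_i\vdash\Delta_i$ is the subsequent of the conclusion of $\rho_i$ consisting of occurrences that are neither $\Omega$- nor cut-ancestors; otherwise $\Xi_{\rho_1}\otimes_\sigma\Xi_{\rho_2}$. $\Xi(\pi,\Omega)$ is the value at the last inference. **Schematic projection term.** The projection symbols have the rewrite rules $\mathrm{pr}^{\psi_\beta,\Omega}(0,\bar x)\to\Xi(\pi_\beta,\Omega)$ and $\mathrm{pr}^{\psi_\beta,\Omega}(k+1,\bar x)\to\Xi(\nu_\beta(k),\Omega)$. $\Xi(\Psi)\!\downarrow_\gamma$ is a normal form of $\mathrm{pr}^{\psi_1,\emptyset}(\gamma,\bar x)$ under these rules plus the defined-symbol rules. A projection term is normal if it has no projection symbols. **Evaluation of normal projection terms** to sets of normal proofs: - $|S|=\{S\}$ for an axiom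 $S$; - $|\rho(\Xi)|=\{\rho(\pi)\mid\pi\in|\Xi|\}$; - $|w^{\Gamma\vdash\Delta}(\Xi)|$ is the set of proofs in $|\Xi|$ followed by weakenings adding $\Gamma\vdash\Delta$; - $|\Xi_1\oplus\Xi_2|=|\Xi_1|\cup|\Xi_2|$; - $|\Xi_1\otimes_\sigma\Xi_2|=\{\sigma(\pi_1,\pi_2)\mid\pi_i\in|\Xi_i|\}$. Finally, $\mathrm{PR}(\pi)=|\Xi(\pi,\emptyset)|$ for normal $\pi$, and $\mathrm{PR}(\Psi)\!\downarrow_\gamma=|\Xi(\Psi)\!\downarrow_\gamma|$. *)

theory Defs
  imports Main
begin

section \<open>Two-sorted first-order language\<close>

datatype sort = Omega | Iota

text \<open>Free variables carry their sort. Bound variables are de Bruijn indices.\<close>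
type_synonym var = "nat \<times> sort"

text \<open>FU: uninterpreted function symbols, FD: defined function symbols;
      likewise for predicate symbols.\<close>
datatype fsym = FU nat | FD nat
datatype psym = PU nat | PD nat
datatype dsym = DF nat | DP nat

datatype trm = Bd nat | Fr var | Zero | Sc trm | Fn fsym "trm list"
datatype fm = Atom psym "trm list" | Neg fm | Conj fm fm | Disj fm fm | Imp fm fm
  | All sort fm | Ex sort fm

type_synonym sequent = "fm list \<times> fm list"

definition num_t :: "nat \<Rightarrow> trm" where
  "num_t n = (Sc ^^ n) Zero"

text \<open>Templates: the recursion variable y is (0,Omega), the parameters are
  xvars ss = (1,ss!0), (2,ss!1), ...  The base template of f is s (for f(0,x)),
  the step template is t[f(y,x)] (for f(s(y),x)), given literally with the
  occurrences of f(y,x).\<close>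
record lang =
  fsig :: "fsym \<Rightarrow> sort list \<times> sort"
  psig :: "psym \<Rightarrow> sort list"
  fbase :: "nat \<Rightarrow> trm"
  fstepr :: "nat \<Rightarrow> trm"
  pbase :: "nat \<Rightarrow> fm"
  pstepr :: "nat \<Rightarrow> fm"
  dord :: "dsym rel"

definition yvar :: var where "yvar = (0, Omega)"
definition xvars :: "sort list \<Rightarrow> var list" where
  "xvars ss = map (\<lambda>j. (Suc j, ss ! j)) [0..<length ss]"

primrec lift_t :: "nat \<Rightarrow> trm \<Rightarrow> trm" where
  "lift_t d (Bd i) = (if i < d then Bd i else Bd (Suc i))"
| "lift_t d (Fr v) = Fr v"
| "lift_t d Zero = Zero"
| "lift_t d (Sc u) = Sc (lift_t d u)"
| "lift_t d (Fn g us) = Fn g (map (lift_t d) us)"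

primrec inst_t :: "nat \<Rightarrow> trm \<Rightarrow> trm \<Rightarrow> trm" where
  "inst_t d t (Bd i) = (if i < d then Bd i else if i = d then t else Bd (i - 1))"
| "inst_t d t (Fr v) = Fr v"
| "inst_t d t Zero = Zero"
| "inst_t d t (Sc u) = Sc (inst_t d t u)"
| "inst_t d t (Fn g us) = Fn g (map (inst_t d t) us)"

primrec inst_f :: "nat \<Rightarrow> trm \<Rightarrow> fm \<Rightarrow> fm" where
  "inst_f d t (Atom P us) = Atom P (map (inst_t d t) us)"
| "inst_f d t (Neg A) = Neg (inst_f d t A)"
| "inst_f d t (Conj A B) = Conj (inst_f d t A) (inst_f d t B)"
| "inst_f d t (Disj A B) = Disj (inst_f d t A) (inst_f d t B)"
| "inst_f d t (Imp A B) = Imp (inst_f d t A) (inst_f d t B)"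
| "inst_f d t (All s A) = All s (inst_f (Suc d) (lift_t 0 t) A)"
| "inst_f d t (Ex s A) = Ex s (inst_f (Suc d) (lift_t 0 t) A)"

primrec subst_t :: "(var \<Rightarrow> trm) \<Rightarrow> trm \<Rightarrow> trm" where
  "subst_t \<sigma> (Bd i) = Bd i"
| "subst_t \<sigma> (Fr v) = \<sigma> v"
| "subst_t \<sigma> Zero = Zero"
| "subst_t \<sigma> (Sc u) = Sc (subst_t \<sigma> u)"
| "subst_t \<sigma> (Fn g us) = Fn g (map (subst_t \<sigma>) us)"

primrec subst_f :: "(var \<Rightarrow> trm) \<Rightarrow> fm \<Rightarrow> fm" where
  "subst_f \<sigma> (Atom P us) = Atom P (map (subst_t \<sigma>) us)"
| "subst_f \<sigma> (Neg A) = Neg (subst_f \<sigma> A)"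
| "subst_f \<sigma> (Conj A B) = Conj (subst_f \<sigma> A) (subst_f \<sigma> B)"
| "subst_f \<sigma> (Disj A B) = Disj (subst_f \<sigma> A) (subst_f \<sigma> B)"
| "subst_f \<sigma> (Imp A B) = Imp (subst_f \<sigma> A) (subst_f \<sigma> B)"
| "subst_f \<sigma> (All s A) = All s (subst_f (lift_t 0 \<circ> \<sigma>) A)"
| "subst_f \<sigma> (Ex s A) = Ex s (subst_f (lift_t 0 \<circ> \<sigma>) A)"

definition subst_seq :: "(var \<Rightarrow> trm) \<Rightarrow> sequent \<Rightarrow> sequent" where
  "subst_seq \<sigma> S = (map (subst_f \<sigma>) (fst S), map (subst_f \<sigma>) (snd S))"

definition mk_subst :: "var list \<Rightarrow> trm list \<Rightarrow> var \<Rightarrow> trm" where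
  "mk_subst vs ts v = (case map_of (zip vs ts) v of Some t \<Rightarrow> t | None \<Rightarrow> Fr v)"

primrec fv_t :: "trm \<Rightarrow> var set" where
  "fv_t (Bd i) = {}"
| "fv_t (Fr v) = {v}"
| "fv_t Zero = {}"
| "fv_t (Sc u) = fv_t u"
| "fv_t (Fn g us) = \<Union>(set (map fv_t us))"

primrec fv_f :: "fm \<Rightarrow> var set" where
  "fv_f (Atom P us) = \<Union>(set (map fv_t us))"
| "fv_f (Neg A) = fv_f A"
| "fv_f (Conj A B) = fv_f A \<union> fv_f B"
| "fv_f (Disj A B) = fv_f A \<union> fv_f B"
| "fv_f (Imp A B) = fv_f A \<union> fv_f B"
| "fv_f (All s A) = fv_f A"
| "fv_f (Ex s A) = fv_f A"

definition fv_seq :: "sequent \<Rightarrow> var set" where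
  "fv_seq S = (\<Union>A\<in>set (fst S) \<union> set (snd S). fv_f A)"

primrec dsyms_t :: "trm \<Rightarrow> dsym set" where
  "dsyms_t (Bd i) = {}"
| "dsyms_t (Fr v) = {}"
| "dsyms_t Zero = {}"
| "dsyms_t (Sc u) = dsyms_t u"
| "dsyms_t (Fn g us) = (case g of FD f \<Rightarrow> {DF f} | FU f \<Rightarrow> {}) \<union> \<Union>(set (map dsyms_t us))"

primrec dsyms_f :: "fm \<Rightarrow> dsym set" where
  "dsyms_f (Atom P us) = (case P of PD p \<Rightarrow> {DP p} | PU p \<Rightarrow> {}) \<union> \<Union>(set (map dsyms_t us))"
| "dsyms_f (Neg A) = dsyms_f A"
| "dsyms_f (Conj A B) = dsyms_f A \<union> dsyms_f B"
| "dsyms_f (Disj A B) = dsyms_f A \<union> dsyms_f B"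
| "dsyms_f (Imp A B) = dsyms_f A \<union> dsyms_f B"
| "dsyms_f (All s A) = dsyms_f A"
| "dsyms_f (Ex s A) = dsyms_f A"

definition dsyms_seq :: "sequent \<Rightarrow> dsym set" where
  "dsyms_seq S = (\<Union>A\<in>set (fst S) \<union> set (snd S). dsyms_f A)"

primrec fapps_t :: "nat \<Rightarrow> trm \<Rightarrow> trm list set" where
  "fapps_t f (Bd i) = {}"
| "fapps_t f (Fr v) = {}"
| "fapps_t f Zero = {}"
| "fapps_t f (Sc u) = fapps_t f u"
| "fapps_t f (Fn g us) = (if g = FD f then {us} else {}) \<union> \<Union>(set (map (fapps_t f) us))"

primrec papps_f :: "nat \<Rightarrow> fm \<Rightarrow> trm list set" where
  "papps_f p (Atom P us) = (if P = PD p then {us} else {})"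
| "papps_f p (Neg A) = papps_f p A"
| "papps_f p (Conj A B) = papps_f p A \<union> papps_f p B"
| "papps_f p (Disj A B) = papps_f p A \<union> papps_f p B"
| "papps_f p (Imp A B) = papps_f p A \<union> papps_f p B"
| "papps_f p (All s A) = papps_f p A"
| "papps_f p (Ex s A) = papps_f p A"

text \<open>Sorting (env = sorts of the de Bruijn-bound variables).\<close>
primrec sort_of :: "lang \<Rightarrow> sort list \<Rightarrow> trm \<Rightarrow> sort option" where
  "sort_of L env (Bd i) = (if i < length env then Some (env ! i) else None)"
| "sort_of L env (Fr v) = Some (snd v)"
| "sort_of L env Zero = Some Omega"
| "sort_of L env (Sc u) = (if sort_of L env u = Some Omega then Some Omega else None)"
| "sort_of L env (Fn g us) =
     (if map (sort_of L env) us = map Some (fst (fsig L g)) then Some (snd (fsig L g)) else None)"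

primrec wf_f :: "lang \<Rightarrow> sort list \<Rightarrow> fm \<Rightarrow> bool" where
  "wf_f L env (Atom P us) = (map (sort_of L env) us = map Some (psig L P))"
| "wf_f L env (Neg A) = wf_f L env A"
| "wf_f L env (Conj A B) = (wf_f L env A \<and> wf_f L env B)"
| "wf_f L env (Disj A B) = (wf_f L env A \<and> wf_f L env B)"
| "wf_f L env (Imp A B) = (wf_f L env A \<and> wf_f L env B)"
| "wf_f L env (All s A) = wf_f L (s # env) A"
| "wf_f L env (Ex s A) = wf_f L (s # env) A"

definition wf_seq :: "lang \<Rightarrow> sequent \<Rightarrow> bool" where
  "wf_seq L S = (\<forall>A\<in>set (fst S) \<union> set (snd S). wf_f L [] A)"

text \<open>Conditions on the defined symbols: primitive recursive rules whose right-hand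
  sides only use defined symbols g \<prec> f (\<prec> a fixed irreflexive order), apart from the
  recursive occurrence f(y,x) in the step rule.\<close>
definition wf_lang :: "lang \<Rightarrow> bool" where
  "wf_lang L \<longleftrightarrow> irrefl (dord L) \<and> trans (dord L) \<and>
    (\<forall>f. \<exists>ss r. fsig L (FD f) = (Omega # ss, r) \<and>
       sort_of L [] (fbase L f) = Some r \<and> fv_t (fbase L f) \<subseteq> set (xvars ss) \<and>
       (\<forall>g\<in>dsyms_t (fbase L f). (g, DF f) \<in> dord L) \<and>
       sort_of L [] (fstepr L f) = Some r \<and> fv_t (fstepr L f) \<subseteq> set (yvar # xvars ss) \<and>
       (\<forall>g\<in>dsyms_t (fstepr L f). g = DF f \<or> (g, DF f) \<in> dord L) \<and>
       (\<forall>us\<in>fapps_t f (fstepr L f). us = map Fr (yvar # xvars ss))) \<and>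
    (\<forall>p. \<exists>ss. psig L (PD p) = Omega # ss \<and>
       wf_f L [] (pbase L p) \<and> fv_f (pbase L p) \<subseteq> set (xvars ss) \<and>
       (\<forall>g\<in>dsyms_f (pbase L p). (g, DP p) \<in> dord L) \<and>
       wf_f L [] (pstepr L p) \<and> fv_f (pstepr L p) \<subseteq> set (yvar # xvars ss) \<and>
       (\<forall>g\<in>dsyms_f (pstepr L p). g = DP p \<or> (g, DP p) \<in> dord L) \<and>
       (\<forall>us\<in>papps_f p (pstepr L p). us = map Fr (yvar # xvars ss)))"

definition lstep :: "('a \<Rightarrow> 'a \<Rightarrow> bool) \<Rightarrow> 'a list \<Rightarrow> 'a list \<Rightarrow> bool" where
  "lstep R xs ys \<longleftrightarrow> (\<exists>as b b' cs. xs = as @ b # cs \<and> ys = as @ b' # cs \<and> R b b')"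

inductive tstep :: "lang \<Rightarrow> trm \<Rightarrow> trm \<Rightarrow> bool" for L where
  base: "fsig L (FD f) = (Omega # ss, r) \<Longrightarrow> length us = length ss \<Longrightarrow>
    tstep L (Fn (FD f) (Zero # us)) (subst_t (mk_subst (xvars ss) us) (fbase L f))"
| rec: "fsig L (FD f) = (Omega # ss, r) \<Longrightarrow> length us = length ss \<Longrightarrow>
    tstep L (Fn (FD f) (Sc u # us)) (subst_t (mk_subst (yvar # xvars ss) (u # us)) (fstepr L f))"
| sc: "tstep L u u' \<Longrightarrow> tstep L (Sc u) (Sc u')"
| fn: "tstep L u u' \<Longrightarrow> tstep L (Fn g (xs @ u # ys)) (Fn g (xs @ u' # ys))"

inductive fstep :: "lang \<Rightarrow> fm \<Rightarrow> fm \<Rightarrow> bool" for L where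
  arg: "lstep (tstep L) us us' \<Longrightarrow> fstep L (Atom P us) (Atom P us')"
| base: "psig L (PD p) = Omega # ss \<Longrightarrow> length us = length ss \<Longrightarrow>
    fstep L (Atom (PD p) (Zero # us)) (subst_f (mk_subst (xvars ss) us) (pbase L p))"
| rec: "psig L (PD p) = Omega # ss \<Longrightarrow> length us = length ss \<Longrightarrow>
    fstep L (Atom (PD p) (Sc u # us)) (subst_f (mk_subst (yvar # xvars ss) (u # us)) (pstepr L p))"
| neg: "fstep L A A' \<Longrightarrow> fstep L (Neg A) (Neg A')"
| conj1: "fstep L A A' \<Longrightarrow> fstep L (Conj A B) (Conj A' B)"
| conj2: "fstep L B B' \<Longrightarrow> fstep L (Conj A B) (Conj A B')"
| disj1: "fstep L A A' \<Longrightarrow> fstep L (Disj A B) (Disj A' B)"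
| disj2: "fstep L B B' \<Longrightarrow> fstep L (Disj A B) (Disj A B')"
| imp1: "fstep L A A' \<Longrightarrow> fstep L (Imp A B) (Imp A' B)"
| imp2: "fstep L B B' \<Longrightarrow> fstep L (Imp A B) (Imp A B')"
| all: "fstep L A A' \<Longrightarrow> fstep L (All s A) (All s A')"
| ex: "fstep L A A' \<Longrightarrow> fstep L (Ex s A) (Ex s A')"

definition seq_step :: "lang \<Rightarrow> sequent \<Rightarrow> sequent \<Rightarrow> bool" where
  "seq_step L S S' \<longleftrightarrow>
     (lstep (fstep L) (fst S) (fst S') \<and> snd S = snd S') \<or>
     (fst S = fst S' \<and> lstep (fstep L) (snd S) (snd S'))"

text \<open>E |= t = t': equational consequence of the rules read as equations
  (by Birkhoff's theorem: convertibility).\<close>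
definition E_eq :: "lang \<Rightarrow> trm \<Rightarrow> trm \<Rightarrow> bool" where
  "E_eq L = (\<lambda>a b. tstep L a b \<or> tstep L b a)\<^sup>*\<^sup>*"

inductive trm_repl :: "trm \<Rightarrow> trm \<Rightarrow> trm \<Rightarrow> trm \<Rightarrow> bool" for t t' where
  refl: "trm_repl t t' u u"
| here: "trm_repl t t' t t'"
| sc: "trm_repl t t' u u' \<Longrightarrow> trm_repl t t' (Sc u) (Sc u')"
| fn: "list_all2 (trm_repl t t') us us' \<Longrightarrow> trm_repl t t' (Fn g us) (Fn g us')"

fun fm_repl :: "trm \<Rightarrow> trm \<Rightarrow> fm \<Rightarrow> fm \<Rightarrow> bool" where
  "fm_repl t t' (Atom P us) (Atom Q vs) = (P = Q \<and> list_all2 (trm_repl t t') us vs)"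
| "fm_repl t t' (Neg A) (Neg A') = fm_repl t t' A A'"
| "fm_repl t t' (Conj A B) (Conj A' B') = (fm_repl t t' A A' \<and> fm_repl t t' B B')"
| "fm_repl t t' (Disj A B) (Disj A' B') = (fm_repl t t' A A' \<and> fm_repl t t' B B')"
| "fm_repl t t' (Imp A B) (Imp A' B') = (fm_repl t t' A A' \<and> fm_repl t t' B B')"
| "fm_repl t t' (All s A) (All s' A') = (s = s' \<and> fm_repl t t' A A')"
| "fm_repl t t' (Ex s A) (Ex s' A') = (s = s' \<and> fm_repl t t' A A')"
| "fm_repl t t' _ _ = False"

definition seq_repl :: "trm \<Rightarrow> trm \<Rightarrow> sequent \<Rightarrow> sequent \<Rightarrow> bool" where
  "seq_repl t t' S S' \<longleftrightarrow>
     list_all2 (fm_repl t t') (fst S) (fst S') \<and> list_all2 (fm_repl t t') (snd S) (snd S')"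

section \<open>LKS_E proofs\<close>

datatype rkind = WeakL | WeakR | ContrL | ContrR | NegL | NegR | AndL | OrR | ImpR
  | AllL | AllR | ExL | ExR | AndR | OrL | ImpL | Cut

text \<open>Unary inference: kind, positions of the auxiliary occurrences in the antecedent and
  succedent of the premise, and the main formula. The conclusion is the main formula
  followed by the context (premise without auxiliary occurrences).
  Binary inference: kind, position of the auxiliary occurrence in premise 1 and in
  premise 2, and the main (resp. cut) formula.\<close>
datatype urule = URule rkind "nat list" "nat list" fm
datatype brule = BRule rkind nat nat fm

text \<open>Proof symbols \<psi>_1,...,\<psi>_\<alpha> are represented by the indices 0,...,\<alpha>-1.
  Link b a as S is the lkproof link (\<psi>_(b+1)(a, as)) above S.\<close>
datatype lkproof = Ax fm | Link nat trm "trm list" sequent | Unary urule lkproof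
  | Binary brule lkproof lkproof | ERule sequent lkproof

definition main_left :: "rkind \<Rightarrow> bool" where
  "main_left k \<longleftrightarrow> k \<in> {WeakL, ContrL, NegL, AndL, AllL, ExL, OrL, ImpL}"
definition a1_left :: "rkind \<Rightarrow> bool" where "a1_left k \<longleftrightarrow> k = OrL"
definition a2_left :: "rkind \<Rightarrow> bool" where "a2_left k \<longleftrightarrow> k \<in> {OrL, ImpL, Cut}"

definition ctx :: "fm list \<Rightarrow> nat list \<Rightarrow> fm list" where
  "ctx xs is = nths xs (- set is)"

fun ucon :: "urule \<Rightarrow> sequent \<Rightarrow> sequent" where
  "ucon (URule k ls rs m) (G, D) =
     ((if main_left k then [m] else []) @ ctx G ls, (if main_left k then [] else [m]) @ ctx D rs)"

fun bcon :: "brule \<Rightarrow> sequent \<Rightarrow> sequent \<Rightarrow> sequent" where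
  "bcon (BRule k i j m) (G1, D1) (G2, D2) =
     (let G1' = (if a1_left k then ctx G1 [i] else G1); D1' = (if a1_left k then D1 else ctx D1 [i]);
          G2' = (if a2_left k then ctx G2 [j] else G2); D2' = (if a2_left k then D2 else ctx D2 [j]);
          mm = (if k = Cut then [] else [m])
      in ((if main_left k then mm else []) @ G1' @ G2', (if main_left k then [] else mm) @ D1' @ D2'))"

fun concl :: "lkproof \<Rightarrow> sequent" where
  "concl (Ax A) = ([A], [A])"
| "concl (Link b a as S) = S"
| "concl (Unary r p) = ucon r (concl p)"
| "concl (Binary r p q) = bcon r (concl p) (concl q)"
| "concl (ERule S p) = S"

fun urule_ok :: "lang \<Rightarrow> urule \<Rightarrow> sequent \<Rightarrow> bool" where
  "urule_ok L (URule k ls rs m) (G, D) =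
    (wf_f L [] m \<and> distinct ls \<and> distinct rs \<and> (\<forall>i\<in>set ls. i < length G) \<and> (\<forall>i\<in>set rs. i < length D) \<and>
     (case k of
       WeakL \<Rightarrow> ls = [] \<and> rs = []
     | WeakR \<Rightarrow> ls = [] \<and> rs = []
     | ContrL \<Rightarrow> rs = [] \<and> (\<exists>i j. ls = [i, j] \<and> G ! i = m \<and> G ! j = m)
     | ContrR \<Rightarrow> ls = [] \<and> (\<exists>i j. rs = [i, j] \<and> D ! i = m \<and> D ! j = m)
     | NegL \<Rightarrow> ls = [] \<and> (\<exists>i. rs = [i] \<and> m = Neg (D ! i))
     | NegR \<Rightarrow> rs = [] \<and> (\<exists>i. ls = [i] \<and> m = Neg (G ! i))
     | AndL \<Rightarrow> rs = [] \<and> (\<exists>i A B. ls = [i] \<and> m = Conj A B \<and> (G ! i = A \<or> G ! i = B))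
     | OrR \<Rightarrow> ls = [] \<and> (\<exists>i A B. rs = [i] \<and> m = Disj A B \<and> (D ! i = A \<or> D ! i = B))
     | ImpR \<Rightarrow> (\<exists>i j. ls = [i] \<and> rs = [j] \<and> m = Imp (G ! i) (D ! j))
     | AllL \<Rightarrow> rs = [] \<and> (\<exists>i s F t. ls = [i] \<and> m = All s F \<and> sort_of L [] t = Some s \<and> G ! i = inst_f 0 t F)
     | AllR \<Rightarrow> ls = [] \<and> (\<exists>i s F v. rs = [i] \<and> m = All s F \<and> snd v = s \<and> D ! i = inst_f 0 (Fr v) F \<and>
                 v \<notin> fv_seq (ucon (URule k ls rs m) (G, D)))
     | ExL \<Rightarrow> rs = [] \<and> (\<exists>i s F v. ls = [i] \<and> m = Ex s F \<and> snd v = s \<and> G ! i = inst_f 0 (Fr v) F \<and>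
                 v \<notin> fv_seq (ucon (URule k ls rs m) (G, D)))
     | ExR \<Rightarrow> ls = [] \<and> (\<exists>i s F t. rs = [i] \<and> m = Ex s F \<and> sort_of L [] t = Some s \<and> D ! i = inst_f 0 t F)
     | _ \<Rightarrow> False))"

fun brule_ok :: "lang \<Rightarrow> brule \<Rightarrow> sequent \<Rightarrow> sequent \<Rightarrow> bool" where
  "brule_ok L (BRule k i j m) (G1, D1) (G2, D2) =
    (wf_f L [] m \<and> i < length (if a1_left k then G1 else D1) \<and> j < length (if a2_left k then G2 else D2) \<and>
     (case k of
       AndR \<Rightarrow> m = Conj (D1 ! i) (D2 ! j)
     | OrL \<Rightarrow> m = Disj (G1 ! i) (G2 ! j)
     | ImpL \<Rightarrow> m = Imp (D1 ! i) (G2 ! j)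
     | Cut \<Rightarrow> D1 ! i = m \<and> G2 ! j = m
     | _ \<Rightarrow> False))"

definition is_atom :: "fm \<Rightarrow> bool" where
  "is_atom A \<longleftrightarrow> (\<exists>P us. A = Atom P us)"

section \<open>Proof schemata\<close>

text \<open>Component for \<psi>_\<beta>: sequent S(n, xs), the variables n, xs, k, and the pair (\<pi>, \<nu>(k)).\<close>
record comp =
  cseq :: sequent
  cn :: var
  cxs :: "var list"
  ck :: var
  cpi :: lkproof
  cnu :: lkproof

type_synonym schema = "comp list"

definition link_ok :: "lang \<Rightarrow> schema \<Rightarrow> nat \<Rightarrow> trm \<Rightarrow> trm list \<Rightarrow> sequent \<Rightarrow> bool" where
  "link_ok L \<Psi> b a as S \<longleftrightarrow> b < length \<Psi> \<and> sort_of L [] a = Some Omega \<and>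
     map (sort_of L []) as = map (Some \<circ> snd) (cxs (\<Psi> ! b)) \<and>
     S = subst_seq (mk_subst (cn (\<Psi> ! b) # cxs (\<Psi> ! b)) (a # as)) (cseq (\<Psi> ! b))"

text \<open>LKS_E proofs; "ok b a" says which lkproof links (\<psi>_b(a, ...)) are admitted.\<close>
fun valid :: "lang \<Rightarrow> schema \<Rightarrow> (nat \<Rightarrow> trm \<Rightarrow> bool) \<Rightarrow> lkproof \<Rightarrow> bool" where
  "valid L \<Psi> ok (Ax A) = (is_atom A \<and> wf_f L [] A)"
| "valid L \<Psi> ok (Link b a as S) = (ok b a \<and> link_ok L \<Psi> b a as S)"
| "valid L \<Psi> ok (Unary r p) = (valid L \<Psi> ok p \<and> urule_ok L r (concl p))"
| "valid L \<Psi> ok (Binary r p q) = (valid L \<Psi> ok p \<and> valid L \<Psi> ok q \<and> brule_ok L r (concl p) (concl q))"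
| "valid L \<Psi> ok (ERule S p) =
     (valid L \<Psi> ok p \<and> wf_seq L S \<and> (\<exists>t t'. E_eq L t t' \<and> seq_repl t t' (concl p) S))"

definition comp_ok :: "lang \<Rightarrow> schema \<Rightarrow> nat \<Rightarrow> comp \<Rightarrow> bool" where
  "comp_ok L \<Psi> \<beta> c \<longleftrightarrow>
     snd (cn c) = Omega \<and> snd (ck c) = Omega \<and> distinct (cn c # cxs c) \<and> ck c \<notin> set (cxs c) \<and>
     wf_seq L (cseq c) \<and> fv_seq (cseq c) \<subseteq> set (cn c # cxs c) \<and>
     valid L \<Psi> (\<lambda>\<gamma> a. \<beta> < \<gamma> \<and> fv_t a \<subseteq> {ck c}) (cpi c) \<and>
     concl (cpi c) = subst_seq (mk_subst [cn c] [Zero]) (cseq c) \<and>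
     valid L \<Psi> (\<lambda>\<gamma> a. (\<beta> < \<gamma> \<and> fv_t a \<subseteq> {ck c}) \<or> (\<gamma> = \<beta> \<and> a = Fr (ck c))) (cnu c) \<and>
     concl (cnu c) = subst_seq (mk_subst [cn c] [Sc (Fr (ck c))]) (cseq c)"

definition is_schema :: "lang \<Rightarrow> schema \<Rightarrow> bool" where
  "is_schema L \<Psi> \<longleftrightarrow> wf_lang L \<and> \<Psi> \<noteq> [] \<and> (\<forall>\<beta><length \<Psi>. comp_ok L \<Psi> \<beta> (\<Psi> ! \<beta>))"

section \<open>Evaluation of lkproof schemata\<close>

definition subst_ur :: "(var \<Rightarrow> trm) \<Rightarrow> urule \<Rightarrow> urule" where
  "subst_ur \<sigma> r = (case r of URule k ls rs m \<Rightarrow> URule k ls rs (subst_f \<sigma> m))"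
definition subst_br :: "(var \<Rightarrow> trm) \<Rightarrow> brule \<Rightarrow> brule" where
  "subst_br \<sigma> r = (case r of BRule k i j m \<Rightarrow> BRule k i j (subst_f \<sigma> m))"

primrec subst_p :: "(var \<Rightarrow> trm) \<Rightarrow> lkproof \<Rightarrow> lkproof" where
  "subst_p \<sigma> (Ax A) = Ax (subst_f \<sigma> A)"
| "subst_p \<sigma> (Link b a as S) = Link b (subst_t \<sigma> a) (map (subst_t \<sigma>) as) (subst_seq \<sigma> S)"
| "subst_p \<sigma> (Unary r p) = Unary (subst_ur \<sigma> r) (subst_p \<sigma> p)"
| "subst_p \<sigma> (Binary r p q) = Binary (subst_br \<sigma> r) (subst_p \<sigma> p) (subst_p \<sigma> q)"
| "subst_p \<sigma> (ERule S p) = ERule (subst_seq \<sigma> S) (subst_p \<sigma> p)"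

inductive pstep :: "lang \<Rightarrow> schema \<Rightarrow> lkproof \<Rightarrow> lkproof \<Rightarrow> bool" for L \<Psi> where
  ax: "fstep L A A' \<Longrightarrow> pstep L \<Psi> (Ax A) (Ax A')"
| link_a: "tstep L a a' \<Longrightarrow> pstep L \<Psi> (Link b a as S) (Link b a' as S)"
| link_as: "lstep (tstep L) as as' \<Longrightarrow> pstep L \<Psi> (Link b a as S) (Link b a as' S)"
| link_S: "seq_step L S S' \<Longrightarrow> pstep L \<Psi> (Link b a as S) (Link b a as S')"
| link_0: "b < length \<Psi> \<Longrightarrow> length as = length (cxs (\<Psi> ! b)) \<Longrightarrow>
    pstep L \<Psi> (Link b Zero as S) (subst_p (mk_subst (cxs (\<Psi> ! b)) as) (cpi (\<Psi> ! b)))"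
| link_S': "b < length \<Psi> \<Longrightarrow> length as = length (cxs (\<Psi> ! b)) \<Longrightarrow>
    pstep L \<Psi> (Link b (Sc t) as S)
      (subst_p (mk_subst (ck (\<Psi> ! b) # cxs (\<Psi> ! b)) (t # as)) (cnu (\<Psi> ! b)))"
| u_rule: "fstep L m m' \<Longrightarrow> pstep L \<Psi> (Unary (URule k ls rs m) p) (Unary (URule k ls rs m') p)"
| u_sub: "pstep L \<Psi> p p' \<Longrightarrow> pstep L \<Psi> (Unary r p) (Unary r p')"
| b_rule: "fstep L m m' \<Longrightarrow> pstep L \<Psi> (Binary (BRule k i j m) p q) (Binary (BRule k i j m') p q)"
| b_sub1: "pstep L \<Psi> p p' \<Longrightarrow> pstep L \<Psi> (Binary r p q) (Binary r p' q)"
| b_sub2: "pstep L \<Psi> q q' \<Longrightarrow> pstep L \<Psi> (Binary r p q) (Binary r p q')"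
| e_seq: "seq_step L S S' \<Longrightarrow> pstep L \<Psi> (ERule S p) (ERule S' p)"
| e_sub: "pstep L \<Psi> p p' \<Longrightarrow> pstep L \<Psi> (ERule S p) (ERule S p')"

primrec nolinks :: "lkproof \<Rightarrow> bool" where
  "nolinks (Ax A) = True"
| "nolinks (Link b a as S) = False"
| "nolinks (Unary r p) = nolinks p"
| "nolinks (Binary r p q) = (nolinks p \<and> nolinks q)"
| "nolinks (ERule S p) = nolinks p"

primrec dfree_p :: "lkproof \<Rightarrow> bool" where
  "dfree_p (Ax A) = (dsyms_f A = {})"
| "dfree_p (Link b a as S) =
     (dsyms_t a = {} \<and> (\<forall>u\<in>set as. dsyms_t u = {}) \<and> dsyms_seq S = {})"
| "dfree_p (Unary r p) = ((case r of URule k ls rs m \<Rightarrow> dsyms_f m = {}) \<and> dfree_p p)"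
| "dfree_p (Binary r p q) = ((case r of BRule k i j m \<Rightarrow> dsyms_f m = {}) \<and> dfree_p p \<and> dfree_p q)"
| "dfree_p (ERule S p) = (dsyms_seq S = {} \<and> dfree_p p)"

definition normal_proof :: "lkproof \<Rightarrow> bool" where
  "normal_proof p \<longleftrightarrow> nolinks p \<and> dfree_p p"

definition start_link :: "schema \<Rightarrow> nat \<Rightarrow> lkproof" where
  "start_link \<Psi> \<gamma> = Link 0 (num_t \<gamma>) (map Fr (cxs (hd \<Psi>)))
      (subst_seq (mk_subst [cn (hd \<Psi>)] [num_t \<gamma>]) (cseq (hd \<Psi>)))"

text \<open>P is a (normal form) value of \<Psi>\<down>\<gamma>.\<close>
definition schema_eval :: "lang \<Rightarrow> schema \<Rightarrow> nat \<Rightarrow> lkproof \<Rightarrow> bool" where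
  "schema_eval L \<Psi> \<gamma> P \<longleftrightarrow> (pstep L \<Psi>)\<^sup>*\<^sup>* (start_link \<Psi> \<gamma>) P \<and> normal_proof P"

section \<open>Configurations, ancestors, projection terms\<close>

datatype pos = Lp nat | Rp nat

definition positions :: "sequent \<Rightarrow> pos set" where
  "positions S = Lp ` {..<length (fst S)} \<union> Rp ` {..<length (snd S)}"

definition newidx :: "nat list \<Rightarrow> nat \<Rightarrow> nat" where
  "newidx is i = i - card {j \<in> set is. j < i}"

definition mpos :: "rkind \<Rightarrow> pos" where
  "mpos k = (if main_left k then Lp 0 else Rp 0)"

text \<open>Descendant (in the conclusion) of an occurrence of a premise; None = cut formula.\<close>
fun udesc :: "urule \<Rightarrow> pos \<Rightarrow> pos option" where
  "udesc (URule k ls rs m) (Lp i) =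
     (if i \<in> set ls then Some (mpos k) else Some (Lp ((if main_left k then 1 else 0) + newidx ls i)))"
| "udesc (URule k ls rs m) (Rp i) =
     (if i \<in> set rs then Some (mpos k) else Some (Rp ((if main_left k then 0 else 1) + newidx rs i)))"

definition moff :: "rkind \<Rightarrow> bool \<Rightarrow> nat" where
  "moff k left = (if k \<noteq> Cut \<and> main_left k = left then 1 else 0)"

fun bdesc1 :: "brule \<Rightarrow> pos \<Rightarrow> pos option" where
  "bdesc1 (BRule k i j m) (Lp l) =
     (if a1_left k \<and> l = i then (if k = Cut then None else Some (mpos k))
      else Some (Lp (moff k True + (if a1_left k then newidx [i] l else l))))"
| "bdesc1 (BRule k i j m) (Rp l) =
     (if \<not> a1_left k \<and> l = i then (if k = Cut then None else Some (mpos k))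
      else Some (Rp (moff k False + (if a1_left k then l else newidx [i] l))))"

fun bdesc2 :: "brule \<Rightarrow> sequent \<Rightarrow> pos \<Rightarrow> pos option" where
  "bdesc2 (BRule k i j m) (G1, D1) (Lp l) =
     (if a2_left k \<and> l = j then (if k = Cut then None else Some (mpos k))
      else Some (Lp (moff k True + length (if a1_left k then ctx G1 [i] else G1) +
                     (if a2_left k then newidx [j] l else l))))"
| "bdesc2 (BRule k i j m) (G1, D1) (Rp l) =
     (if \<not> a2_left k \<and> l = j then (if k = Cut then None else Some (mpos k))
      else Some (Rp (moff k False + length (if a1_left k then D1 else ctx D1 [i]) +
                     (if a2_left k then l else newidx [j] l))))"

text \<open>Occurrences of a premise that are \<Omega>- or cut-ancestors, given the set M of such
  occurrences of the conclusion.\<close>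
definition premark :: "(pos \<Rightarrow> pos option) \<Rightarrow> sequent \<Rightarrow> pos set \<Rightarrow> pos set" where
  "premark d S M = {p \<in> positions S. case d p of None \<Rightarrow> True | Some q \<Rightarrow> q \<in> M}"

definition unmarked :: "sequent \<Rightarrow> pos set \<Rightarrow> sequent" where
  "unmarked S M = (map (\<lambda>i. fst S ! i) (filter (\<lambda>i. Lp i \<notin> M) [0..<length (fst S)]),
                   map (\<lambda>i. snd S ! i) (filter (\<lambda>i. Rp i \<notin> M) [0..<length (snd S)]))"

text \<open>Rule symbols of projection terms: the inference with its auxiliary formulas recorded.\<close>
datatype uinf = UInf rkind "fm list" "fm list" fm
datatype binf = BInf rkind fm fm fm

datatype pterm = PAx fm | Pr nat "pos set" trm "trm list" | PUn uinf pterm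
  | PW sequent pterm | PPlus pterm pterm | PTimes binf pterm pterm

fun uinf_of :: "urule \<Rightarrow> sequent \<Rightarrow> uinf" where
  "uinf_of (URule k ls rs m) (G, D) = UInf k (map ((!) G) ls) (map ((!) D) rs) m"

fun binf_of :: "brule \<Rightarrow> sequent \<Rightarrow> sequent \<Rightarrow> binf" where
  "binf_of (BRule k i j m) (G1, D1) (G2, D2) =
     BInf k (if a1_left k then G1 ! i else D1 ! i) (if a2_left k then G2 ! j else D2 ! j) m"

fun ukind :: "urule \<Rightarrow> rkind" where "ukind (URule k ls rs m) = k"
fun bkind :: "brule \<Rightarrow> rkind" where "bkind (BRule k i j m) = k"

text \<open>\<Xi>(\<pi>, M), M the \<Omega>- or cut-ancestors among the occurrences of the end-sequent of \<pi>.\<close>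
fun xi :: "lkproof \<Rightarrow> pos set \<Rightarrow> pterm" where
  "xi (Ax A) M = PAx A"
| "xi (Link b a as S) M = Pr b M a as"
| "xi (ERule S p) M = xi p M"
| "xi (Unary r p) M =
     (let M' = premark (udesc r) (concl p) M in
      if mpos (ukind r) \<in> M then xi p M' else PUn (uinf_of r (concl p)) (xi p M'))"
| "xi (Binary r p q) M =
     (let M1 = premark (bdesc1 r) (concl p) M; M2 = premark (bdesc2 r (concl p)) (concl q) M in
      if bkind r = Cut \<or> mpos (bkind r) \<in> M
      then PPlus (PW (unmarked (concl q) M2) (xi p M1)) (PW (unmarked (concl p) M1) (xi q M2))
      else PTimes (binf_of r (concl p) (concl q)) (xi p M1) (xi q M2))"

fun subst_ui :: "(var \<Rightarrow> trm) \<Rightarrow> uinf \<Rightarrow> uinf" where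
  "subst_ui \<sigma> (UInf k as bs m) = UInf k (map (subst_f \<sigma>) as) (map (subst_f \<sigma>) bs) (subst_f \<sigma> m)"
fun subst_bi :: "(var \<Rightarrow> trm) \<Rightarrow> binf \<Rightarrow> binf" where
  "subst_bi \<sigma> (BInf k A B m) = BInf k (subst_f \<sigma> A) (subst_f \<sigma> B) (subst_f \<sigma> m)"

primrec subst_x :: "(var \<Rightarrow> trm) \<Rightarrow> pterm \<Rightarrow> pterm" where
  "subst_x \<sigma> (PAx A) = PAx (subst_f \<sigma> A)"
| "subst_x \<sigma> (Pr b M a as) = Pr b M (subst_t \<sigma> a) (map (subst_t \<sigma>) as)"
| "subst_x \<sigma> (PUn r X) = PUn (subst_ui \<sigma> r) (subst_x \<sigma> X)"
| "subst_x \<sigma> (PW S X) = PW (subst_seq \<sigma> S) (subst_x \<sigma> X)"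
| "subst_x \<sigma> (PPlus X Y) = PPlus (subst_x \<sigma> X) (subst_x \<sigma> Y)"
| "subst_x \<sigma> (PTimes r X Y) = PTimes (subst_bi \<sigma> r) (subst_x \<sigma> X) (subst_x \<sigma> Y)"

inductive xstep :: "lang \<Rightarrow> schema \<Rightarrow> pterm \<Rightarrow> pterm \<Rightarrow> bool" for L \<Psi> where
  ax: "fstep L A A' \<Longrightarrow> xstep L \<Psi> (PAx A) (PAx A')"
| pr_a: "tstep L a a' \<Longrightarrow> xstep L \<Psi> (Pr b M a as) (Pr b M a' as)"
| pr_as: "lstep (tstep L) as as' \<Longrightarrow> xstep L \<Psi> (Pr b M a as) (Pr b M a as')"
| pr_0: "b < length \<Psi> \<Longrightarrow> length as = length (cxs (\<Psi> ! b)) \<Longrightarrow>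
    xstep L \<Psi> (Pr b M Zero as) (subst_x (mk_subst (cxs (\<Psi> ! b)) as) (xi (cpi (\<Psi> ! b)) M))"
| pr_S: "b < length \<Psi> \<Longrightarrow> length as = length (cxs (\<Psi> ! b)) \<Longrightarrow>
    xstep L \<Psi> (Pr b M (Sc t) as)
      (subst_x (mk_subst (ck (\<Psi> ! b) # cxs (\<Psi> ! b)) (t # as)) (xi (cnu (\<Psi> ! b)) M))"
| un_l: "lstep (fstep L) as as' \<Longrightarrow> xstep L \<Psi> (PUn (UInf k as bs m) X) (PUn (UInf k as' bs m) X)"
| un_r: "lstep (fstep L) bs bs' \<Longrightarrow> xstep L \<Psi> (PUn (UInf k as bs m) X) (PUn (UInf k as bs' m) X)"
| un_m: "fstep L m m' \<Longrightarrow> xstep L \<Psi> (PUn (UInf k as bs m) X) (PUn (UInf k as bs m') X)"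
| un_sub: "xstep L \<Psi> X X' \<Longrightarrow> xstep L \<Psi> (PUn r X) (PUn r X')"
| w_seq: "seq_step L S S' \<Longrightarrow> xstep L \<Psi> (PW S X) (PW S' X)"
| w_sub: "xstep L \<Psi> X X' \<Longrightarrow> xstep L \<Psi> (PW S X) (PW S X')"
| plus1: "xstep L \<Psi> X X' \<Longrightarrow> xstep L \<Psi> (PPlus X Y) (PPlus X' Y)"
| plus2: "xstep L \<Psi> Y Y' \<Longrightarrow> xstep L \<Psi> (PPlus X Y) (PPlus X Y')"
| times_1: "fstep L A A' \<Longrightarrow> xstep L \<Psi> (PTimes (BInf k A B m) X Y) (PTimes (BInf k A' B m) X Y)"
| times_2: "fstep L B B' \<Longrightarrow> xstep L \<Psi> (PTimes (BInf k A B m) X Y) (PTimes (BInf k A B' m) X Y)"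
| times_m: "fstep L m m' \<Longrightarrow> xstep L \<Psi> (PTimes (BInf k A B m) X Y) (PTimes (BInf k A B m') X Y)"
| times_s1: "xstep L \<Psi> X X' \<Longrightarrow> xstep L \<Psi> (PTimes r X Y) (PTimes r X' Y)"
| times_s2: "xstep L \<Psi> Y Y' \<Longrightarrow> xstep L \<Psi> (PTimes r X Y) (PTimes r X Y')"

primrec nopr :: "pterm \<Rightarrow> bool" where
  "nopr (PAx A) = True"
| "nopr (Pr b M a as) = False"
| "nopr (PUn r X) = nopr X"
| "nopr (PW S X) = nopr X"
| "nopr (PPlus X Y) = (nopr X \<and> nopr Y)"
| "nopr (PTimes r X Y) = (nopr X \<and> nopr Y)"

definition start_pr :: "schema \<Rightarrow> nat \<Rightarrow> pterm" where
  "start_pr \<Psi> \<gamma> = Pr 0 {} (num_t \<gamma>) (map Fr (cxs (hd \<Psi>)))"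

text \<open>X is a (normal form) value of \<Xi>(\<Psi>)\<down>\<gamma>: reachable, irreducible, no projection symbols.\<close>
definition proj_eval :: "lang \<Rightarrow> schema \<Rightarrow> nat \<Rightarrow> pterm \<Rightarrow> bool" where
  "proj_eval L \<Psi> \<gamma> X \<longleftrightarrow> (xstep L \<Psi>)\<^sup>*\<^sup>* (start_pr \<Psi> \<gamma>) X \<and> nopr X \<and> \<not> (\<exists>Y. xstep L \<Psi> X Y)"

text \<open>Realising a recorded rule symbol on a concrete lkproof: the auxiliary formulas are
  taken as (the first unused) occurrences of the recorded formulas.\<close>
fun pickp :: "fm list \<Rightarrow> nat list \<Rightarrow> fm list \<Rightarrow> nat list" where
  "pickp xs used [] = []"
| "pickp xs used (a # as) =
     (let i = (LEAST i. i < length xs \<and> i \<notin> set used \<and> xs ! i = a) in i # pickp xs (i # used) as)"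

fun urule_at :: "uinf \<Rightarrow> sequent \<Rightarrow> urule" where
  "urule_at (UInf k as bs m) (G, D) = URule k (pickp G [] as) (pickp D [] bs) m"

fun brule_at :: "binf \<Rightarrow> sequent \<Rightarrow> sequent \<Rightarrow> brule" where
  "brule_at (BInf k A B m) (G1, D1) (G2, D2) =
     BRule k (hd (pickp (if a1_left k then G1 else D1) [] [A]))
             (hd (pickp (if a2_left k then G2 else D2) [] [B])) m"

definition weaken :: "sequent \<Rightarrow> lkproof \<Rightarrow> lkproof" where
  "weaken S p = foldr (\<lambda>A q. Unary (URule WeakR [] [] A) q) (snd S)
                  (foldr (\<lambda>A q. Unary (URule WeakL [] [] A) q) (fst S) p)"

fun evalp :: "pterm \<Rightarrow> lkproof set" where
  "evalp (PAx A) = {Ax A}"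
| "evalp (Pr b M a as) = {}"
| "evalp (PUn r X) = (\<lambda>p. Unary (urule_at r (concl p)) p) ` evalp X"
| "evalp (PW S X) = weaken S ` evalp X"
| "evalp (PPlus X Y) = evalp X \<union> evalp Y"
| "evalp (PTimes r X Y) = {Binary (brule_at r (concl p) (concl q)) p q | p q. p \<in> evalp X \<and> q \<in> evalp Y}"

definition PR :: "lkproof \<Rightarrow> lkproof set" where
  "PR p = evalp (xi p {})"

end

theory Submission
  imports Defs "HOL-Library.Confluence"
begin

text \<open>Evaluating a proof schema and projecting commute up to conversion: every evaluation step
  of an LKS-proof (unfolding a proof link, or rewriting with a defining rule) turns its
  projection term into a convertible one, because unfolding a link \<open>\<psi>\<^sub>\<beta>(k+1)\<close> into
  \<open>\<nu>\<^sub>\<beta>(k)\<close> is mirrored by the rule for the projection symbol and the projection of a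
  substitution instance is the instance of the projection. So \<open>\<Xi>(\<Psi>\<down>\<gamma>, \<emptyset>)\<close> is convertible
  to the start term \<open>start_pr \<Psi> \<gamma>\<close>. Rewriting of projection terms is confluent
  (parallel reduction and complete developments), and the projection of a normal proof contains
  no defined symbols and no projection symbols, hence is normal. By confluence it is therefore
  the normal form \<open>\<Xi>(\<Psi>)\<down>\<gamma>\<close>, and both sides evaluate to the same set of proofs.\<close>

lemma rtranclp_map:
  assumes "\<And>a b. R a b \<Longrightarrow> S (f a) (f b)" and "R\<^sup>*\<^sup>* a b"
  shows "S\<^sup>*\<^sup>* (f a) (f b)"
  using assms(2) by induction (auto intro: rtranclp.rtrancl_into_rtrancl assms(1))

lemma equivclp_map:
  assumes "\<And>a b. R a b \<Longrightarrow> S (f a) (f b)" and "equivclp R a b"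
  shows "equivclp S (f a) (f b)"
proof -
  have "symclp S (f a) (f b)" if "symclp R a b" for a b
    using that by (auto elim!: symclpE intro: symclpI assms(1))
  then show ?thesis using assms(2) unfolding equivclp_def by (rule rtranclp_map)
qed

lemma confluentp_if_diamond_between:
  assumes "\<And>a b. R a b \<Longrightarrow> P a b" and "\<And>a b. P a b \<Longrightarrow> R\<^sup>*\<^sup>* a b"
    and diamond: "\<And>x a b. P x a \<Longrightarrow> P x b \<Longrightarrow> \<exists>c. P a c \<and> P b c"
  shows "confluentp R"
proof -
  have "strong_confluentp P"
  proof (rule strong_confluentpI)
    fix x y z
    assume "P x y" "P x z"
    then obtain c where "P y c" "P z c" using diamond by blast
    then show "\<exists>u. P\<^sup>*\<^sup>* y u \<and> P\<^sup>=\<^sup>= z u" by auto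
  qed
  then have "confluentp P" by (rule strong_confluentp_imp_confluentp)
  moreover have "P\<^sup>*\<^sup>* = R\<^sup>*\<^sup>*"
    by (rule rtranclp_subset) (auto intro: assms(1,2))
  ultimately show ?thesis
    unfolding confluentp_def rtranclp_conversep by simp
qed

lemma normal_rtranclp_eq: "R\<^sup>*\<^sup>* a c \<Longrightarrow> \<not> (\<exists>b. R a b) \<Longrightarrow> a = c"
  by (induction rule: converse_rtranclp_induct) auto

lemma equivclp_normal_forms_eq:
  assumes "confluentp R" "equivclp R a b" "\<not> (\<exists>c. R a c)" "\<not> (\<exists>c. R b c)"
  shows "a = b"
proof -
  have "(R\<^sup>*\<^sup>* OO R\<inverse>\<inverse>\<^sup>*\<^sup>*) a b"
    using assms(2) semiconfluentp_equivclp[OF confluentp_imp_semiconfluentp[OF assms(1)]] by simp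
  then obtain c where "R\<^sup>*\<^sup>* a c" "R\<^sup>*\<^sup>* b c" by (auto simp: rtranclp_conversep)
  then show ?thesis using assms(3,4) normal_rtranclp_eq by metis
qed

lemma lstep_Cons: "lstep R xs ys \<Longrightarrow> lstep R (z # xs) (z # ys)"
  unfolding lstep_def by (metis append_Cons)

lemma lstep_head: "R x y \<Longrightarrow> lstep R (x # xs) (y # xs)"
  unfolding lstep_def by (metis append_Nil)

lemma lstep_length: "lstep R xs ys \<Longrightarrow> length xs = length ys"
  unfolding lstep_def by auto

lemma list_all2_if_lstep:
  "lstep R xs ys \<Longrightarrow> (\<And>x y. R x y \<Longrightarrow> R' x y) \<Longrightarrow> (\<And>x. R' x x) \<Longrightarrow> list_all2 R' xs ys"
  unfolding lstep_def by (auto simp: list_all2_appendI list_all2_refl)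

lemma rtranclp_lstep: "list_all2 R\<^sup>*\<^sup>* xs ys \<Longrightarrow> (lstep R)\<^sup>*\<^sup>* xs ys"
proof (induction rule: list_all2_induct)
  case (Cons x xs y ys)
  have "(lstep R)\<^sup>*\<^sup>* (x # xs) (y # xs)"
    by (rule rtranclp_map[of R "lstep R" "\<lambda>a. a # xs", OF lstep_head Cons(1)])
  moreover have "(lstep R)\<^sup>*\<^sup>* (y # xs) (y # ys)"
    by (rule rtranclp_map[of "lstep R" "lstep R" "\<lambda>a. y # a", OF lstep_Cons Cons(3)])
  ultimately show ?case by simp
qed simp

lemma equivclp_lstep: "list_all2 (equivclp R) xs ys \<Longrightarrow> equivclp (lstep R) xs ys"
proof (induction rule: list_all2_induct)
  case (Cons x xs y ys)
  have "equivclp (lstep R) (x # xs) (y # xs)"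
    by (rule equivclp_map[of R "lstep R" "\<lambda>a. a # xs", OF lstep_head Cons(1)])
  also have "equivclp (lstep R) (y # xs) (y # ys)"
    by (rule equivclp_map[of "lstep R" "lstep R" "\<lambda>a. y # a", OF lstep_Cons Cons(3)])
  finally show ?case .
qed simp

lemma list_all2_map_same: "(\<And>u. u \<in> set us \<Longrightarrow> Q (f u) (g u)) \<Longrightarrow> list_all2 Q (map f us) (map g us)"
  by (auto simp: list_all2_conv_all_nth)

lemma list_all2_swap_map: "list_all2 (\<lambda>a b. Q b (f a)) us us' \<Longrightarrow> list_all2 Q us' (map f us)"
  by (auto simp: list_all2_conv_all_nth)

lemma mk_subst_Cons: "mk_subst (w # ws) (t # ts) v = (if v = w then t else mk_subst ws ts v)"
  by (simp add: mk_subst_def)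

lemma mk_subst_Nil: "mk_subst [] ts v = Fr v" "mk_subst ws [] v = Fr v"
  by (simp_all add: mk_subst_def)

lemma mk_subst_rel:
  "list_all2 R ts ts' \<Longrightarrow> (\<And>v. R (Fr v) (Fr v)) \<Longrightarrow> R (mk_subst vs ts v) (mk_subst vs ts' v)"
proof (induction vs arbitrary: ts ts')
  case (Cons w ws)
  show ?case
  proof (cases ts)
    case ts: (Cons t ts0)
    with Cons.prems obtain t' ts0' where "ts' = t' # ts0'" "R t t'" "list_all2 R ts0 ts0'"
      by (auto simp: list_all2_Cons1)
    with ts Cons.IH[of ts0 ts0'] Cons.prems(2) show ?thesis by (auto simp: mk_subst_Cons)
  qed (use Cons.prems in \<open>simp add: mk_subst_Nil\<close>)
qed (simp add: mk_subst_Nil)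

lemma mk_subst_map: "(\<And>v. h (Fr v) = Fr v) \<Longrightarrow> h (mk_subst vs ts v) = mk_subst vs (map h ts) v"
proof (induction vs arbitrary: ts)
  case (Cons w ws) then show ?case by (cases ts) (auto simp: mk_subst_Cons mk_subst_Nil)
qed (simp add: mk_subst_Nil)

lemma subst_mk_subst:
  "length vs = length ts \<Longrightarrow> v \<in> set vs \<Longrightarrow>
   subst_t \<sigma> (mk_subst vs ts v) = mk_subst vs (map (subst_t \<sigma>) ts) v"
proof (induction vs arbitrary: ts)
  case (Cons w ws) then show ?case by (cases ts) (auto simp: mk_subst_Cons)
qed simp

lemma mk_subst_self: "mk_subst vs (map Fr vs) v = Fr v"
  by (induction vs) (auto simp: mk_subst_Nil mk_subst_Cons)

lemma subst_lift_t: "subst_t (lift_t d \<circ> \<sigma>) (lift_t d t) = lift_t d (subst_t \<sigma> t)"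
  by (induction t) auto

lemma subst_t_subst_t: "subst_t \<sigma> (subst_t \<tau> t) = subst_t (subst_t \<sigma> \<circ> \<tau>) t"
  by (induction t) auto

lemma subst_f_subst_f: "subst_f \<sigma> (subst_f \<tau> F) = subst_f (subst_t \<sigma> \<circ> \<tau>) F"
  by (induction F arbitrary: \<sigma> \<tau>) (simp_all add: subst_t_subst_t comp_def subst_lift_t[unfolded comp_def])

lemma subst_t_cong: "(\<And>v. v \<in> fv_t t \<Longrightarrow> \<sigma> v = \<sigma>' v) \<Longrightarrow> subst_t \<sigma> t = subst_t \<sigma>' t"
  by (induction t) auto

lemma subst_f_cong: "(\<And>v. v \<in> fv_f F \<Longrightarrow> \<sigma> v = \<sigma>' v) \<Longrightarrow> subst_f \<sigma> F = subst_f \<sigma>' F"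
proof (induction F arbitrary: \<sigma> \<sigma>')
  case (Atom P us)
  have "subst_t \<sigma> u = subst_t \<sigma>' u" if "u \<in> set us" for u
    using that Atom by (intro subst_t_cong) auto
  then show ?case by simp
next
  case (Neg A)
  show ?case by (simp, intro Neg.IH) (simp add: Neg.prems)
next
  case (Conj A B)
  show ?case by (simp, intro conjI Conj.IH) (simp_all add: Conj.prems)
next
  case (Disj A B)
  show ?case by (simp, intro conjI Disj.IH) (simp_all add: Disj.prems)
next
  case (Imp A B)
  show ?case by (simp, intro conjI Imp.IH) (simp_all add: Imp.prems)
next
  case (All s A)
  show ?case by (simp, intro All.IH) (simp add: All.prems)
next
  case (Ex s A)
  show ?case by (simp, intro Ex.IH) (simp add: Ex.prems)
qed

lemma subst_seq_cong:
  "(\<And>v. v \<in> fv_seq S \<Longrightarrow> \<sigma> v = \<rho> v) \<Longrightarrow> subst_seq \<sigma> S = subst_seq \<rho> S"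
  unfolding subst_seq_def fv_seq_def by (auto intro!: subst_f_cong)

lemma subst_seq_subst_seq_cong:
  "(\<And>v. v \<in> fv_seq S \<Longrightarrow> subst_t \<sigma> (\<tau> v) = \<rho> v) \<Longrightarrow> subst_seq \<sigma> (subst_seq \<tau> S) = subst_seq \<rho> S"
  unfolding subst_seq_def fv_seq_def by (auto simp: subst_f_subst_f intro!: subst_f_cong; blast)

primrec bd_below :: "nat \<Rightarrow> trm \<Rightarrow> bool" where
  "bd_below n (Bd i) = (i < n)"
| "bd_below n (Fr v) = True"
| "bd_below n Zero = True"
| "bd_below n (Sc u) = bd_below n u"
| "bd_below n (Fn g us) = list_all (bd_below n) us"

lemma bd_below_if_sort_of: "sort_of L env t \<noteq> None \<Longrightarrow> bd_below (length env) t"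
proof (induction t)
  case (Fn g us)
  then have "map (sort_of L env) us = map Some (fst (fsig L g))"
    by (auto split: if_splits)
  then have "sort_of L env u \<noteq> None" if "u \<in> set us" for u
  proof -
    have "sort_of L env u \<in> set (map Some (fst (fsig L g)))"
      using that \<open>map (sort_of L env) us = _\<close> by (metis image_eqI list.set_map)
    then show ?thesis by auto
  qed
  then show ?case using Fn by (auto simp: list_all_iff)
qed (auto split: if_splits)

lemma lift_subst_closed: "bd_below 0 t \<Longrightarrow> lift_t d (subst_t \<sigma> t) = subst_t (lift_t d \<circ> \<sigma>) t"
  by (induction t) (auto simp: list_all_iff)

lemma wf_lang_closed: "wf_lang L \<Longrightarrow> bd_below 0 (fbase L f) \<and> bd_below 0 (fstepr L f)"
  unfolding wf_lang_def by (metis list.size(3) option.distinct(1) bd_below_if_sort_of)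

section \<open>Parallel reduction of terms\<close>

inductive tpar :: "lang \<Rightarrow> trm \<Rightarrow> trm \<Rightarrow> bool" for L where
  bd: "tpar L (Bd i) (Bd i)"
| fr: "tpar L (Fr v) (Fr v)"
| zero: "tpar L Zero Zero"
| sc: "tpar L u u' \<Longrightarrow> tpar L (Sc u) (Sc u')"
| fn: "list_all2 (tpar L) us us' \<Longrightarrow> tpar L (Fn g us) (Fn g us')"
| base: "fsig L (FD f) = (Omega # ss, r) \<Longrightarrow> length us = length ss \<Longrightarrow> list_all2 (tpar L) us us' \<Longrightarrow>
    tpar L (Fn (FD f) (Zero # us)) (subst_t (mk_subst (xvars ss) us') (fbase L f))"
| rec: "fsig L (FD f) = (Omega # ss, r) \<Longrightarrow> length us = length ss \<Longrightarrow> tpar L u u' \<Longrightarrow>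
    list_all2 (tpar L) us us' \<Longrightarrow>
    tpar L (Fn (FD f) (Sc u # us)) (subst_t (mk_subst (yvar # xvars ss) (u' # us')) (fstepr L f))"

lemma tpar_refl [simp, intro]: "tpar L t t"
  by (induction t) (auto intro: tpar.intros simp: list_all2_same)

lemma list_tpar_refl [simp]: "list_all2 (tpar L) us us"
  by (simp add: list_all2_refl)

lemma tpar_subst: "(\<And>v. tpar L (\<sigma> v) (\<sigma>' v)) \<Longrightarrow> tpar L (subst_t \<sigma> t) (subst_t \<sigma>' t)"
  by (induction t) (auto intro!: tpar.intros list_all2_map_same)

lemma tpar_mk_subst: "list_all2 (tpar L) ts ts' \<Longrightarrow> tpar L (mk_subst vs ts v) (mk_subst vs ts' v)"
  by (rule mk_subst_rel) auto

inductive_cases tpar_ZeroE: "tpar L Zero y"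
inductive_cases tpar_ScE: "tpar L (Sc u) y"

lemma tpar_Zero: "tpar L Zero y \<Longrightarrow> y = Zero"
  by (erule tpar_ZeroE) auto

lemma tpar_Sc: "tpar L (Sc u) y \<Longrightarrow> \<exists>u'. y = Sc u' \<and> tpar L u u'"
  by (erule tpar_ScE) auto

lemma tpar_lift_t: "tpar L u u' \<Longrightarrow> wf_lang L \<Longrightarrow> tpar L (lift_t d u) (lift_t d u')"
proof (induction rule: tpar.induct)
  case (fn us us' g)
  then show ?case by (auto intro!: tpar.fn simp: list.rel_map elim: list_all2_mono)
next
  case (base f ss r us us')
  have "tpar L (Fn (FD f) (Zero # map (lift_t d) us))
      (subst_t (mk_subst (xvars ss) (map (lift_t d) us')) (fbase L f))"
    using base by (intro tpar.base) (auto simp: list.rel_map elim: list_all2_mono)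
  then show ?case
    using wf_lang_closed[OF base.prems] by (simp add: lift_subst_closed mk_subst_map comp_def)
next
  case (rec f ss r us u u' us')
  have "tpar L (Fn (FD f) (Sc (lift_t d u) # map (lift_t d) us))
      (subst_t (mk_subst (yvar # xvars ss) (lift_t d u' # map (lift_t d) us')) (fstepr L f))"
    using rec by (intro tpar.rec) (auto simp: list.rel_map elim: list_all2_mono)
  then show ?case
    using wf_lang_closed[OF rec.prems] by (simp add: lift_subst_closed mk_subst_map comp_def)
qed (auto intro: tpar.intros)

lemma tstep_tpar: "tstep L t t' \<Longrightarrow> tpar L t t'"
proof (induction rule: tstep.induct)
  case (base f ss r us)
  then show ?case using tpar.base[of L f ss r us us] by simp
next
  case (rec f ss r us u)
  then show ?case using tpar.rec[of L f ss r us u u us] by simp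
qed (auto intro!: tpar.intros list_all2_appendI)

lemma list_tpar_if_lstep: "lstep (tstep L) us us' \<Longrightarrow> list_all2 (tpar L) us us'"
  by (erule list_all2_if_lstep) (auto intro: tstep_tpar)

lemma rtranclp_tstep_Fn: "(lstep (tstep L))\<^sup>*\<^sup>* us us' \<Longrightarrow> (tstep L)\<^sup>*\<^sup>* (Fn g us) (Fn g us')"
  by (rule rtranclp_map[where f = "Fn g"]) (auto simp: lstep_def intro: tstep.fn)

lemma rtranclp_tstep_Sc: "(tstep L)\<^sup>*\<^sup>* u u' \<Longrightarrow> (tstep L)\<^sup>*\<^sup>* (Sc u) (Sc u')"
  by (rule rtranclp_map[where f = Sc]) (auto intro: tstep.sc)

lemma tpar_tstep: "tpar L t t' \<Longrightarrow> (tstep L)\<^sup>*\<^sup>* t t'"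
proof (induction rule: tpar.induct)
  case (sc u u')
  show ?case using sc.IH by (rule rtranclp_tstep_Sc)
next
  case (fn us us' g)
  then show ?case by (intro rtranclp_tstep_Fn rtranclp_lstep) (auto elim: list_all2_mono)
next
  case (base f ss r us us')
  then have "(tstep L)\<^sup>*\<^sup>* (Fn (FD f) (Zero # us)) (Fn (FD f) (Zero # us'))"
    by (intro rtranclp_tstep_Fn rtranclp_lstep) (auto elim: list_all2_mono)
  also have "tstep L (Fn (FD f) (Zero # us')) (subst_t (mk_subst (xvars ss) us') (fbase L f))"
    using base by (intro tstep.base) (auto dest: list_all2_lengthD)
  finally show ?case .
next
  case (rec f ss r us u u' us')
  then have "(tstep L)\<^sup>*\<^sup>* (Fn (FD f) (Sc u # us)) (Fn (FD f) (Sc u' # us'))"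
    by (intro rtranclp_tstep_Fn rtranclp_lstep) (auto elim: list_all2_mono intro: rtranclp_tstep_Sc)
  also have "tstep L (Fn (FD f) (Sc u' # us')) (subst_t (mk_subst (yvar # xvars ss) (u' # us')) (fstepr L f))"
    using rec by (intro tstep.rec) (auto dest: list_all2_lengthD)
  finally show ?case .
qed auto

lemma list_tstep_if_tpar: "list_all2 (tpar L) us us' \<Longrightarrow> (lstep (tstep L))\<^sup>*\<^sup>* us us'"
  by (intro rtranclp_lstep) (auto elim: list_all2_mono intro: tpar_tstep)

definition fdef_arity :: "lang \<Rightarrow> nat \<Rightarrow> nat \<Rightarrow> bool" where
  "fdef_arity L f n \<longleftrightarrow> (\<exists>ss r. fsig L (FD f) = (Omega # ss, r) \<and> length ss = n)"

definition fdef_params :: "lang \<Rightarrow> nat \<Rightarrow> sort list" where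
  "fdef_params L f = tl (fst (fsig L (FD f)))"

lemma fdef_arity_iff: "fsig L (FD f) = (Omega # ss, r) \<Longrightarrow> fdef_arity L f n \<longleftrightarrow> length ss = n"
  by (auto simp: fdef_arity_def)

lemma fdef_params_eq: "fsig L (FD f) = (Omega # ss, r) \<Longrightarrow> fdef_params L f = ss"
  by (auto simp: fdef_params_def)

lemma fdef_arityD:
  "fdef_arity L f n \<Longrightarrow>
   fsig L (FD f) = (Omega # fdef_params L f, snd (fsig L (FD f))) \<and> length (fdef_params L f) = n"
  by (auto simp: fdef_arity_def fdef_params_def)

text \<open>Complete development: all redexes of a term are contracted at once, which yields a
  common parallel reduct of all parallel reducts of the term.\<close>

fun tdev :: "lang \<Rightarrow> trm \<Rightarrow> trm" where
  "tdev L (Bd i) = Bd i"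
| "tdev L (Fr v) = Fr v"
| "tdev L Zero = Zero"
| "tdev L (Sc u) = Sc (tdev L u)"
| "tdev L (Fn (FD f) (Zero # us)) = (if fdef_arity L f (length us)
     then subst_t (mk_subst (xvars (fdef_params L f)) (map (tdev L) us)) (fbase L f)
     else Fn (FD f) (Zero # map (tdev L) us))"
| "tdev L (Fn (FD f) (Sc u # us)) = (if fdef_arity L f (length us)
     then subst_t (mk_subst (yvar # xvars (fdef_params L f)) (tdev L u # map (tdev L) us)) (fstepr L f)
     else Fn (FD f) (Sc (tdev L u) # map (tdev L) us))"
| "tdev L (Fn g us) = Fn g (map (tdev L) us)"

lemma tdev_Fn_no_redex:
  assumes "\<nexists>f us0. g = FD f \<and> us = Zero # us0 \<and> fdef_arity L f (length us0)"
    and "\<nexists>f u us0. g = FD f \<and> us = Sc u # us0 \<and> fdef_arity L f (length us0)"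
  shows "tdev L (Fn g us) = Fn g (map (tdev L) us)"
proof (cases g)
  case (FD f)
  then show ?thesis
    using assms by (cases us) (simp, rename_tac x us0, case_tac x, auto)
qed simp

lemma tpar_tdev_Fn:
  assumes args_dev: "list_all2 (\<lambda>a b. tpar L a b \<and> tpar L b (tdev L a)) us us'"
  shows "tpar L (Fn g us') (tdev L (Fn g us))"
proof -
  consider (base) f us0 where "g = FD f" "us = Zero # us0" "fdef_arity L f (length us0)"
    | (rec) f u us0 where "g = FD f" "us = Sc u # us0" "fdef_arity L f (length us0)"
    | (none) "tdev L (Fn g us) = Fn g (map (tdev L) us)"
    using tdev_Fn_no_redex by metis
  then show ?thesis
  proof cases
    case base
    with args_dev obtain us0' where us': "us' = Zero # us0'"
      and args: "list_all2 (\<lambda>a b. tpar L a b \<and> tpar L b (tdev L a)) us0 us0'"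
      by (auto simp: list_all2_Cons1 dest: tpar_Zero)
    have "list_all2 (tpar L) us0' (map (tdev L) us0)" "length us0' = length us0"
      using args by (auto intro: list_all2_swap_map elim: list_all2_mono dest: list_all2_lengthD)
    then show ?thesis
      using base us' fdef_arityD[OF base(3)] by (auto intro: tpar.base)
  next
    case rec
    with args_dev obtain u' us0' where us': "us' = Sc u' # us0'" and u': "tpar L u' (tdev L u)"
      and args: "list_all2 (\<lambda>a b. tpar L a b \<and> tpar L b (tdev L a)) us0 us0'"
      by (auto simp: list_all2_Cons1 dest!: tpar_Sc)
    have "list_all2 (tpar L) us0' (map (tdev L) us0)" "length us0' = length us0"
      using args by (auto intro: list_all2_swap_map elim: list_all2_mono dest: list_all2_lengthD)
    then show ?thesis
      using rec us' u' fdef_arityD[OF rec(3)] by (auto intro: tpar.rec)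
  next
    case none
    then show ?thesis
      using args_dev by (auto intro!: tpar.fn list_all2_swap_map elim: list_all2_mono)
  qed
qed

lemma tpar_tdev: "tpar L t t' \<Longrightarrow> tpar L t' (tdev L t)"
proof (induction rule: tpar.induct)
  case (fn us us' g)
  then show ?case by (intro tpar_tdev_Fn) (auto elim: list_all2_mono)
next
  case (base f ss r us us')
  then have "list_all2 (tpar L) us' (map (tdev L) us)"
    by (intro list_all2_swap_map) (auto elim: list_all2_mono)
  then show ?case using base.hyps
    by (auto simp: fdef_arity_iff fdef_params_eq intro!: tpar_subst tpar_mk_subst)
next
  case (rec f ss r us u u' us')
  then have "list_all2 (tpar L) us' (map (tdev L) us)"
    by (intro list_all2_swap_map) (auto elim: list_all2_mono)
  then show ?case using rec.hyps rec.IH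
    by (auto simp: fdef_arity_iff fdef_params_eq intro!: tpar_subst tpar_mk_subst)
qed (auto intro: tpar.intros)

lemma list_tpar_tdev: "list_all2 (tpar L) us us' \<Longrightarrow> list_all2 (tpar L) us' (map (tdev L) us)"
  by (intro list_all2_swap_map) (auto elim: list_all2_mono intro: tpar_tdev)

inductive fpar :: "lang \<Rightarrow> fm \<Rightarrow> fm \<Rightarrow> bool" for L where
  atom: "list_all2 (tpar L) us us' \<Longrightarrow> fpar L (Atom P us) (Atom P us')"
| base: "psig L (PD p) = Omega # ss \<Longrightarrow> length us = length ss \<Longrightarrow> list_all2 (tpar L) us us' \<Longrightarrow>
    fpar L (Atom (PD p) (Zero # us)) (subst_f (mk_subst (xvars ss) us') (pbase L p))"
| rec: "psig L (PD p) = Omega # ss \<Longrightarrow> length us = length ss \<Longrightarrow> tpar L u u' \<Longrightarrow>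
    list_all2 (tpar L) us us' \<Longrightarrow>
    fpar L (Atom (PD p) (Sc u # us)) (subst_f (mk_subst (yvar # xvars ss) (u' # us')) (pstepr L p))"
| neg: "fpar L A A' \<Longrightarrow> fpar L (Neg A) (Neg A')"
| conj: "fpar L A A' \<Longrightarrow> fpar L B B' \<Longrightarrow> fpar L (Conj A B) (Conj A' B')"
| disj: "fpar L A A' \<Longrightarrow> fpar L B B' \<Longrightarrow> fpar L (Disj A B) (Disj A' B')"
| imp: "fpar L A A' \<Longrightarrow> fpar L B B' \<Longrightarrow> fpar L (Imp A B) (Imp A' B')"
| all: "fpar L A A' \<Longrightarrow> fpar L (All s A) (All s A')"
| ex: "fpar L A A' \<Longrightarrow> fpar L (Ex s A) (Ex s A')"

lemma fpar_refl [simp, intro]: "fpar L A A"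
  by (induction A) (auto intro: fpar.intros)

lemma list_fpar_refl [simp]: "list_all2 (fpar L) As As"
  by (simp add: list_all2_refl)

text \<open>Substitutions pass under binders by lifting, so this needs the defining rules to be closed.\<close>
lemma fpar_subst:
  "(\<And>v. tpar L (\<sigma> v) (\<sigma>' v)) \<Longrightarrow> wf_lang L \<Longrightarrow> fpar L (subst_f \<sigma> A) (subst_f \<sigma>' A)"
proof (induction A arbitrary: \<sigma> \<sigma>')
  case (All s A)
  have "tpar L ((lift_t 0 \<circ> \<sigma>) v) ((lift_t 0 \<circ> \<sigma>') v)" for v
    using tpar_lift_t[OF All.prems] by simp
  then show ?case using All.IH All.prems(2) by (auto intro: fpar.all)
next
  case (Ex s A)
  have "tpar L ((lift_t 0 \<circ> \<sigma>) v) ((lift_t 0 \<circ> \<sigma>') v)" for v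
    using tpar_lift_t[OF Ex.prems] by simp
  then show ?case using Ex.IH Ex.prems(2) by (auto intro: fpar.ex)
qed (auto intro!: fpar.intros list_all2_map_same tpar_subst)

lemma list_fpar_subst:
  "(\<And>v. tpar L (\<sigma> v) (\<sigma>' v)) \<Longrightarrow> wf_lang L \<Longrightarrow>
   list_all2 (fpar L) (map (subst_f \<sigma>) As) (map (subst_f \<sigma>') As)"
  by (auto intro!: list_all2_map_same fpar_subst)

lemma fstep_fpar: "fstep L A A' \<Longrightarrow> fpar L A A'"
proof (induction rule: fstep.induct)
  case (arg us us' P)
  then show ?case by (intro fpar.atom list_tpar_if_lstep)
next
  case (base p ss us)
  then show ?case using fpar.base[of L p ss us us] by simp
next
  case (rec p ss us u)
  then show ?case using fpar.rec[of L p ss us u u us] by simp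
qed (auto intro: fpar.intros)

lemma list_fpar_if_lstep: "lstep (fstep L) As As' \<Longrightarrow> list_all2 (fpar L) As As'"
  by (erule list_all2_if_lstep) (auto intro: fstep_fpar)

lemma fpar_fstep: "fpar L A A' \<Longrightarrow> (fstep L)\<^sup>*\<^sup>* A A'"
proof (induction rule: fpar.induct)
  case (atom us us' P)
  then show ?case
    using rtranclp_map[of "lstep (tstep L)" "fstep L" "Atom P", OF fstep.arg] list_tstep_if_tpar by blast
next
  case (base p ss us us')
  then have "(fstep L)\<^sup>*\<^sup>* (Atom (PD p) (Zero # us)) (Atom (PD p) (Zero # us'))"
    using rtranclp_map[of "lstep (tstep L)" "fstep L" "Atom (PD p)", OF fstep.arg] list_tstep_if_tpar
    by (metis list.rel_intros(2) tpar.zero)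
  also have "fstep L (Atom (PD p) (Zero # us')) (subst_f (mk_subst (xvars ss) us') (pbase L p))"
    using base by (intro fstep.base) (auto dest: list_all2_lengthD)
  finally show ?case .
next
  case (rec p ss us u u' us')
  then have "(fstep L)\<^sup>*\<^sup>* (Atom (PD p) (Sc u # us)) (Atom (PD p) (Sc u' # us'))"
    using rtranclp_map[of "lstep (tstep L)" "fstep L" "Atom (PD p)", OF fstep.arg] list_tstep_if_tpar
    by (metis list.rel_intros(2) tpar.sc)
  also have "fstep L (Atom (PD p) (Sc u' # us')) (subst_f (mk_subst (yvar # xvars ss) (u' # us')) (pstepr L p))"
    using rec by (intro fstep.rec) (auto dest: list_all2_lengthD)
  finally show ?case .
next
  case (conj A A' B B')
  then show ?case
    using rtranclp_map[of "fstep L" "fstep L" "\<lambda>x. Conj x B", OF fstep.conj1]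
      rtranclp_map[of "fstep L" "fstep L" "Conj A'", OF fstep.conj2] by (meson rtranclp_trans)
next
  case (disj A A' B B')
  then show ?case
    using rtranclp_map[of "fstep L" "fstep L" "\<lambda>x. Disj x B", OF fstep.disj1]
      rtranclp_map[of "fstep L" "fstep L" "Disj A'", OF fstep.disj2] by (meson rtranclp_trans)
next
  case (imp A A' B B')
  then show ?case
    using rtranclp_map[of "fstep L" "fstep L" "\<lambda>x. Imp x B", OF fstep.imp1]
      rtranclp_map[of "fstep L" "fstep L" "Imp A'", OF fstep.imp2] by (meson rtranclp_trans)
qed (auto intro: rtranclp_map[of "fstep L" "fstep L"] fstep.intros)

lemma list_fstep_if_fpar: "list_all2 (fpar L) As As' \<Longrightarrow> (lstep (fstep L))\<^sup>*\<^sup>* As As'"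
  by (intro rtranclp_lstep) (auto elim: list_all2_mono intro: fpar_fstep)

definition pdef_arity :: "lang \<Rightarrow> nat \<Rightarrow> nat \<Rightarrow> bool" where
  "pdef_arity L p n \<longleftrightarrow> (\<exists>ss. psig L (PD p) = Omega # ss \<and> length ss = n)"

definition pdef_params :: "lang \<Rightarrow> nat \<Rightarrow> sort list" where
  "pdef_params L p = tl (psig L (PD p))"

lemma pdef_arity_iff: "psig L (PD p) = Omega # ss \<Longrightarrow> pdef_arity L p n \<longleftrightarrow> length ss = n"
  by (auto simp: pdef_arity_def)

lemma pdef_params_eq: "psig L (PD p) = Omega # ss \<Longrightarrow> pdef_params L p = ss"
  by (auto simp: pdef_params_def)

lemma pdef_arityD:
  "pdef_arity L p n \<Longrightarrow> psig L (PD p) = Omega # pdef_params L p \<and> length (pdef_params L p) = n"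
  by (auto simp: pdef_arity_def pdef_params_def)

fun fdev :: "lang \<Rightarrow> fm \<Rightarrow> fm" where
  "fdev L (Atom (PD p) (Zero # us)) = (if pdef_arity L p (length us)
     then subst_f (mk_subst (xvars (pdef_params L p)) (map (tdev L) us)) (pbase L p)
     else Atom (PD p) (Zero # map (tdev L) us))"
| "fdev L (Atom (PD p) (Sc u # us)) = (if pdef_arity L p (length us)
     then subst_f (mk_subst (yvar # xvars (pdef_params L p)) (tdev L u # map (tdev L) us)) (pstepr L p)
     else Atom (PD p) (Sc (tdev L u) # map (tdev L) us))"
| "fdev L (Atom P us) = Atom P (map (tdev L) us)"
| "fdev L (Neg A) = Neg (fdev L A)"
| "fdev L (Conj A B) = Conj (fdev L A) (fdev L B)"
| "fdev L (Disj A B) = Disj (fdev L A) (fdev L B)"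
| "fdev L (Imp A B) = Imp (fdev L A) (fdev L B)"
| "fdev L (All s A) = All s (fdev L A)"
| "fdev L (Ex s A) = Ex s (fdev L A)"

lemma fdev_Atom_no_redex:
  assumes "\<nexists>p us0. P = PD p \<and> us = Zero # us0 \<and> pdef_arity L p (length us0)"
    and "\<nexists>p u us0. P = PD p \<and> us = Sc u # us0 \<and> pdef_arity L p (length us0)"
  shows "fdev L (Atom P us) = Atom P (map (tdev L) us)"
proof (cases P)
  case (PD p)
  then show ?thesis
    using assms by (cases us) (simp, rename_tac x us0, case_tac x, auto)
qed simp

lemma fpar_fdev_Atom:
  assumes args_par: "list_all2 (tpar L) us us'"
  shows "fpar L (Atom P us') (fdev L (Atom P us))"
proof -
  consider (base) p us0 where "P = PD p" "us = Zero # us0" "pdef_arity L p (length us0)"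
    | (rec) p u us0 where "P = PD p" "us = Sc u # us0" "pdef_arity L p (length us0)"
    | (none) "fdev L (Atom P us) = Atom P (map (tdev L) us)"
    using fdev_Atom_no_redex by metis
  then show ?thesis
  proof cases
    case base
    with args_par obtain us0' where us': "us' = Zero # us0'" and args: "list_all2 (tpar L) us0 us0'"
      by (auto simp: list_all2_Cons1 dest: tpar_Zero)
    have "list_all2 (tpar L) us0' (map (tdev L) us0)" "length us0' = length us0"
      using args by (auto intro: list_tpar_tdev dest: list_all2_lengthD)
    then show ?thesis
      using base us' pdef_arityD[OF base(3)] by (auto intro: fpar.base)
  next
    case rec
    with args_par obtain u' us0' where us': "us' = Sc u' # us0'" and u': "tpar L u u'"
      and args: "list_all2 (tpar L) us0 us0'"
      by (auto simp: list_all2_Cons1 dest!: tpar_Sc)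
    have "list_all2 (tpar L) us0' (map (tdev L) us0)" "length us0' = length us0"
      using args by (auto intro: list_tpar_tdev dest: list_all2_lengthD)
    then show ?thesis
      using rec us' tpar_tdev[OF u'] pdef_arityD[OF rec(3)] by (auto intro: fpar.rec)
  next
    case none
    then show ?thesis using args_par by (auto intro!: fpar.atom list_tpar_tdev)
  qed
qed

lemma fpar_fdev: "fpar L A A' \<Longrightarrow> wf_lang L \<Longrightarrow> fpar L A' (fdev L A)"
proof (induction rule: fpar.induct)
  case (atom us us' P)
  from atom.hyps show ?case by (rule fpar_fdev_Atom)
next
  case (base p ss us us')
  then show ?case
    by (auto simp: pdef_arity_iff pdef_params_eq intro!: fpar_subst tpar_mk_subst list_tpar_tdev)
next
  case (rec p ss us u u' us')
  then show ?case
    by (auto simp: pdef_arity_iff pdef_params_eq intro!: fpar_subst tpar_mk_subst list_tpar_tdev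
        tpar_tdev list.rel_intros(2))
qed (auto intro: fpar.intros)

lemma list_fpar_fdev:
  "list_all2 (fpar L) As As' \<Longrightarrow> wf_lang L \<Longrightarrow> list_all2 (fpar L) As' (map (fdev L) As)"
  by (intro list_all2_swap_map) (auto elim: list_all2_mono intro: fpar_fdev)

section \<open>Confluence of the projection-term rewriting\<close>

fun uipar :: "lang \<Rightarrow> uinf \<Rightarrow> uinf \<Rightarrow> bool" where
  "uipar L (UInf k As Bs m) (UInf k' As' Bs' m') =
     (k = k' \<and> list_all2 (fpar L) As As' \<and> list_all2 (fpar L) Bs Bs' \<and> fpar L m m')"

fun bipar :: "lang \<Rightarrow> binf \<Rightarrow> binf \<Rightarrow> bool" where
  "bipar L (BInf k A B m) (BInf k' A' B' m') = (k = k' \<and> fpar L A A' \<and> fpar L B B' \<and> fpar L m m')"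

definition spar :: "lang \<Rightarrow> sequent \<Rightarrow> sequent \<Rightarrow> bool" where
  "spar L S S' \<longleftrightarrow> list_all2 (fpar L) (fst S) (fst S') \<and> list_all2 (fpar L) (snd S) (snd S')"

inductive xpar :: "lang \<Rightarrow> schema \<Rightarrow> pterm \<Rightarrow> pterm \<Rightarrow> bool" for L \<Psi> where
  ax: "fpar L A A' \<Longrightarrow> xpar L \<Psi> (PAx A) (PAx A')"
| pr: "tpar L a a' \<Longrightarrow> list_all2 (tpar L) as as' \<Longrightarrow> xpar L \<Psi> (Pr b M a as) (Pr b M a' as')"
| pr0: "b < length \<Psi> \<Longrightarrow> length as = length (cxs (\<Psi> ! b)) \<Longrightarrow> list_all2 (tpar L) as as' \<Longrightarrow>
    xpar L \<Psi> (Pr b M Zero as) (subst_x (mk_subst (cxs (\<Psi> ! b)) as') (xi (cpi (\<Psi> ! b)) M))"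
| prS: "b < length \<Psi> \<Longrightarrow> length as = length (cxs (\<Psi> ! b)) \<Longrightarrow> tpar L t t' \<Longrightarrow>
    list_all2 (tpar L) as as' \<Longrightarrow>
    xpar L \<Psi> (Pr b M (Sc t) as)
      (subst_x (mk_subst (ck (\<Psi> ! b) # cxs (\<Psi> ! b)) (t' # as')) (xi (cnu (\<Psi> ! b)) M))"
| un: "uipar L r r' \<Longrightarrow> xpar L \<Psi> X X' \<Longrightarrow> xpar L \<Psi> (PUn r X) (PUn r' X')"
| w: "spar L S S' \<Longrightarrow> xpar L \<Psi> X X' \<Longrightarrow> xpar L \<Psi> (PW S X) (PW S' X')"
| plus: "xpar L \<Psi> X X' \<Longrightarrow> xpar L \<Psi> Y Y' \<Longrightarrow> xpar L \<Psi> (PPlus X Y) (PPlus X' Y')"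
| times: "bipar L r r' \<Longrightarrow> xpar L \<Psi> X X' \<Longrightarrow> xpar L \<Psi> Y Y' \<Longrightarrow>
    xpar L \<Psi> (PTimes r X Y) (PTimes r' X' Y')"

lemma uipar_refl [simp]: "uipar L r r"
  by (cases r) auto

lemma bipar_refl [simp]: "bipar L r r"
  by (cases r) auto

lemma spar_refl [simp]: "spar L S S"
  by (simp add: spar_def)

lemma xpar_refl [simp, intro]: "xpar L \<Psi> X X"
  by (induction X) (auto intro: xpar.intros)

lemma xpar_subst:
  "(\<And>v. tpar L (\<sigma> v) (\<sigma>' v)) \<Longrightarrow> wf_lang L \<Longrightarrow> xpar L \<Psi> (subst_x \<sigma> X) (subst_x \<sigma>' X)"
proof (induction X)
  case (PUn r X) then show ?case
    by (cases r) (auto intro!: xpar.un fpar_subst list_fpar_subst)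
next
  case (PW S X) then show ?case
    by (auto intro!: xpar.w simp: spar_def subst_seq_def intro!: list_fpar_subst)
next
  case (PTimes r X Y) then show ?case
    by (cases r) (auto intro!: xpar.times fpar_subst)
qed (auto intro!: xpar.intros fpar_subst tpar_subst list_all2_map_same)

fun uidev :: "lang \<Rightarrow> uinf \<Rightarrow> uinf" where
  "uidev L (UInf k As Bs m) = UInf k (map (fdev L) As) (map (fdev L) Bs) (fdev L m)"

fun bidev :: "lang \<Rightarrow> binf \<Rightarrow> binf" where
  "bidev L (BInf k A B m) = BInf k (fdev L A) (fdev L B) (fdev L m)"

definition sdev :: "lang \<Rightarrow> sequent \<Rightarrow> sequent" where
  "sdev L S = (map (fdev L) (fst S), map (fdev L) (snd S))"

primrec xdev :: "lang \<Rightarrow> schema \<Rightarrow> pterm \<Rightarrow> pterm" where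
  "xdev L \<Psi> (PAx A) = PAx (fdev L A)"
| "xdev L \<Psi> (Pr b M a as) = (case a of
      Zero \<Rightarrow> (if b < length \<Psi> \<and> length as = length (cxs (\<Psi> ! b))
        then subst_x (mk_subst (cxs (\<Psi> ! b)) (map (tdev L) as)) (xi (cpi (\<Psi> ! b)) M)
        else Pr b M Zero (map (tdev L) as))
    | Sc t \<Rightarrow> (if b < length \<Psi> \<and> length as = length (cxs (\<Psi> ! b))
        then subst_x (mk_subst (ck (\<Psi> ! b) # cxs (\<Psi> ! b)) (tdev L t # map (tdev L) as))
               (xi (cnu (\<Psi> ! b)) M)
        else Pr b M (Sc (tdev L t)) (map (tdev L) as))
    | _ \<Rightarrow> Pr b M (tdev L a) (map (tdev L) as))"
| "xdev L \<Psi> (PUn r X) = PUn (uidev L r) (xdev L \<Psi> X)"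
| "xdev L \<Psi> (PW S X) = PW (sdev L S) (xdev L \<Psi> X)"
| "xdev L \<Psi> (PPlus X Y) = PPlus (xdev L \<Psi> X) (xdev L \<Psi> Y)"
| "xdev L \<Psi> (PTimes r X Y) = PTimes (bidev L r) (xdev L \<Psi> X) (xdev L \<Psi> Y)"

lemma xpar_xdev: "xpar L \<Psi> X X' \<Longrightarrow> wf_lang L \<Longrightarrow> xpar L \<Psi> X' (xdev L \<Psi> X)"
proof (induction rule: xpar.induct)
  case (pr a a' as as' b M)
  have args: "list_all2 (tpar L) as' (map (tdev L) as)" "length as' = length as"
    using pr.hyps(2) by (auto intro: list_tpar_tdev dest: list_all2_lengthD)
  show ?case
  proof (cases a)
    case Zero
    with pr.hyps(1) have "a' = Zero" by (auto dest: tpar_Zero)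
    with Zero show ?thesis
      using args by (auto intro: xpar.pr xpar.pr0)
  next
    case (Sc t)
    then obtain t' where "a' = Sc t'" "tpar L t' (tdev L t)"
      using pr.hyps(1) by (auto dest!: tpar_Sc intro: tpar_tdev)
    then show ?thesis
      using Sc args by (auto intro: xpar.pr xpar.prS tpar.sc)
  qed (use args tpar_tdev[OF pr.hyps(1)] in \<open>auto intro!: xpar.pr\<close>)
next
  case (pr0 b as as' M)
  then show ?case by (auto intro!: xpar_subst tpar_mk_subst list_tpar_tdev)
next
  case (prS b as t t' as' M)
  then show ?case by (auto intro!: xpar_subst tpar_mk_subst list_tpar_tdev tpar_tdev list.rel_intros(2))
next
  case (un r r' X X')
  then show ?case by (cases r; cases r') (auto intro!: xpar.un list_fpar_fdev fpar_fdev)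
next
  case (w S S' X X')
  then show ?case by (auto intro!: xpar.w simp: spar_def sdev_def intro: list_fpar_fdev)
next
  case (times r r' X X' Y Y')
  then show ?case by (cases r; cases r') (auto intro!: xpar.times fpar_fdev)
qed (auto intro!: xpar.intros fpar_fdev)

lemma seq_step_spar: "seq_step L S S' \<Longrightarrow> spar L S S'"
  unfolding seq_step_def spar_def by (auto intro: list_fpar_if_lstep)

lemma xstep_xpar: "xstep L \<Psi> X X' \<Longrightarrow> xpar L \<Psi> X X'"
proof (induction rule: xstep.induct)
  case (pr_0 b as M)
  then show ?case by (intro xpar.pr0) auto
next
  case (pr_S b as t M)
  then show ?case by (intro xpar.prS) auto
qed (auto intro!: xpar.intros intro: fstep_fpar tstep_tpar list_tpar_if_lstep list_fpar_if_lstep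
      seq_step_spar)

lemma spar_seq_step: "spar L S S' \<Longrightarrow> (seq_step L)\<^sup>*\<^sup>* S S'"
proof -
  assume "spar L S S'"
  moreover obtain G D G' D' where S: "S = (G, D)" "S' = (G', D')" by (cases S; cases S') auto
  ultimately have G: "(lstep (fstep L))\<^sup>*\<^sup>* G G'" and D: "(lstep (fstep L))\<^sup>*\<^sup>* D D'"
    by (auto simp: spar_def intro: list_fstep_if_fpar)
  have "(seq_step L)\<^sup>*\<^sup>* (G, D) (G', D)"
    using rtranclp_map[of "lstep (fstep L)" "seq_step L" "\<lambda>x. (x, D)"] G by (simp add: seq_step_def)
  also have "(seq_step L)\<^sup>*\<^sup>* (G', D) (G', D')"
    using rtranclp_map[of "lstep (fstep L)" "seq_step L" "\<lambda>x. (G', x)"] D by (simp add: seq_step_def)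
  finally show ?thesis using S by simp
qed

lemma rtranclp_xstep_cong:
  assumes "(xstep L \<Psi>)\<^sup>*\<^sup>* X X'"
  shows "(xstep L \<Psi>)\<^sup>*\<^sup>* (PUn r X) (PUn r X')" "(xstep L \<Psi>)\<^sup>*\<^sup>* (PW S X) (PW S X')"
    "(xstep L \<Psi>)\<^sup>*\<^sup>* (PPlus X Y) (PPlus X' Y)" "(xstep L \<Psi>)\<^sup>*\<^sup>* (PPlus Y X) (PPlus Y X')"
    "(xstep L \<Psi>)\<^sup>*\<^sup>* (PTimes b X Y) (PTimes b X' Y)"
    "(xstep L \<Psi>)\<^sup>*\<^sup>* (PTimes b Y X) (PTimes b Y X')"
  by (intro rtranclp_map[OF _ assms] xstep.intros; assumption)+

lemma rtranclp_xstep_Pr: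
  assumes "(tstep L)\<^sup>*\<^sup>* a a'" "(lstep (tstep L))\<^sup>*\<^sup>* as as'"
  shows "(xstep L \<Psi>)\<^sup>*\<^sup>* (Pr b M a as) (Pr b M a' as')"
proof -
  have "(xstep L \<Psi>)\<^sup>*\<^sup>* (Pr b M a as) (Pr b M a' as)"
    using rtranclp_map[of _ "xstep L \<Psi>" "\<lambda>x. Pr b M x as", OF xstep.pr_a assms(1)] .
  also have "(xstep L \<Psi>)\<^sup>*\<^sup>* \<dots> (Pr b M a' as')"
    using rtranclp_map[of _ "xstep L \<Psi>" "Pr b M a'", OF xstep.pr_as assms(2)] .
  finally show ?thesis .
qed

lemma rtranclp_xstep_UInf:
  assumes "(lstep (fstep L))\<^sup>*\<^sup>* As As'" "(lstep (fstep L))\<^sup>*\<^sup>* Bs Bs'" "(fstep L)\<^sup>*\<^sup>* m m'"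
  shows "(xstep L \<Psi>)\<^sup>*\<^sup>* (PUn (UInf k As Bs m) X) (PUn (UInf k As' Bs' m') X)"
proof -
  have "(xstep L \<Psi>)\<^sup>*\<^sup>* (PUn (UInf k As Bs m) X) (PUn (UInf k As' Bs m) X)"
    using rtranclp_map[of _ "xstep L \<Psi>" "\<lambda>x. PUn (UInf k x Bs m) X", OF xstep.un_l assms(1)] .
  also have "(xstep L \<Psi>)\<^sup>*\<^sup>* \<dots> (PUn (UInf k As' Bs' m) X)"
    using rtranclp_map[of _ "xstep L \<Psi>" "\<lambda>x. PUn (UInf k As' x m) X", OF xstep.un_r assms(2)] .
  also have "(xstep L \<Psi>)\<^sup>*\<^sup>* \<dots> (PUn (UInf k As' Bs' m') X)"
    using rtranclp_map[of _ "xstep L \<Psi>" "\<lambda>x. PUn (UInf k As' Bs' x) X", OF xstep.un_m assms(3)] .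
  finally show ?thesis .
qed

lemma rtranclp_xstep_BInf:
  assumes "(fstep L)\<^sup>*\<^sup>* A A'" "(fstep L)\<^sup>*\<^sup>* B B'" "(fstep L)\<^sup>*\<^sup>* m m'"
  shows "(xstep L \<Psi>)\<^sup>*\<^sup>* (PTimes (BInf k A B m) X Y) (PTimes (BInf k A' B' m') X Y)"
proof -
  have "(xstep L \<Psi>)\<^sup>*\<^sup>* (PTimes (BInf k A B m) X Y) (PTimes (BInf k A' B m) X Y)"
    using rtranclp_map[of _ "xstep L \<Psi>" "\<lambda>x. PTimes (BInf k x B m) X Y", OF xstep.times_1 assms(1)] .
  also have "(xstep L \<Psi>)\<^sup>*\<^sup>* \<dots> (PTimes (BInf k A' B' m) X Y)"
    using rtranclp_map[of _ "xstep L \<Psi>" "\<lambda>x. PTimes (BInf k A' x m) X Y", OF xstep.times_2 assms(2)] .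
  also have "(xstep L \<Psi>)\<^sup>*\<^sup>* \<dots> (PTimes (BInf k A' B' m') X Y)"
    using rtranclp_map[of _ "xstep L \<Psi>" "\<lambda>x. PTimes (BInf k A' B' x) X Y", OF xstep.times_m assms(3)] .
  finally show ?thesis .
qed

lemma xpar_xstep: "xpar L \<Psi> X X' \<Longrightarrow> (xstep L \<Psi>)\<^sup>*\<^sup>* X X'"
proof (induction rule: xpar.induct)
  case (ax A A')
  then show ?case using rtranclp_map[of "fstep L" "xstep L \<Psi>" PAx, OF xstep.ax] fpar_fstep by blast
next
  case (pr a a' as as' b M)
  then show ?case by (intro rtranclp_xstep_Pr tpar_tstep list_tstep_if_tpar)
next
  case (pr0 b as as' M)
  then show ?case
    by (intro rtranclp.rtrancl_into_rtrancl[OF rtranclp_xstep_Pr] list_tstep_if_tpar)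
       (auto intro!: xstep.pr_0 dest: list_all2_lengthD)
next
  case (prS b as t t' as' M)
  then show ?case
    by (intro rtranclp.rtrancl_into_rtrancl[OF rtranclp_xstep_Pr[of L "Sc t" "Sc t'"]]
        list_tstep_if_tpar tpar_tstep tpar.sc) (auto intro!: xstep.pr_S dest: list_all2_lengthD)
next
  case (un r r' X X')
  obtain k As Bs m As' Bs' m' where r: "r = UInf k As Bs m" "r' = UInf k As' Bs' m'"
    and "(lstep (fstep L))\<^sup>*\<^sup>* As As'" "(lstep (fstep L))\<^sup>*\<^sup>* Bs Bs'" "(fstep L)\<^sup>*\<^sup>* m m'"
    using un.hyps(1) by (cases r; cases r') (auto intro: list_fstep_if_fpar fpar_fstep)
  then have "(xstep L \<Psi>)\<^sup>*\<^sup>* (PUn r X) (PUn r' X)" by (simp add: rtranclp_xstep_UInf)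
  also have "(xstep L \<Psi>)\<^sup>*\<^sup>* \<dots> (PUn r' X')" using un.IH by (rule rtranclp_xstep_cong)
  finally show ?case .
next
  case (w S S' X X')
  have "(xstep L \<Psi>)\<^sup>*\<^sup>* (PW S X) (PW S' X)"
    using rtranclp_map[of _ "xstep L \<Psi>" "\<lambda>x. PW x X", OF xstep.w_seq spar_seq_step[OF w.hyps(1)]] .
  also have "(xstep L \<Psi>)\<^sup>*\<^sup>* \<dots> (PW S' X')" using w.IH by (rule rtranclp_xstep_cong)
  finally show ?case .
next
  case (plus X X' Y Y')
  have "(xstep L \<Psi>)\<^sup>*\<^sup>* (PPlus X Y) (PPlus X' Y)" using plus.IH(1) by (rule rtranclp_xstep_cong)
  also have "(xstep L \<Psi>)\<^sup>*\<^sup>* \<dots> (PPlus X' Y')" using plus.IH(2) by (rule rtranclp_xstep_cong)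
  finally show ?case .
next
  case (times r r' X X' Y Y')
  obtain k A B m A' B' m' where r: "r = BInf k A B m" "r' = BInf k A' B' m'"
    and "(fstep L)\<^sup>*\<^sup>* A A'" "(fstep L)\<^sup>*\<^sup>* B B'" "(fstep L)\<^sup>*\<^sup>* m m'"
    using times.hyps(1) by (cases r; cases r') (auto intro: fpar_fstep)
  then have "(xstep L \<Psi>)\<^sup>*\<^sup>* (PTimes r X Y) (PTimes r' X Y)" by (simp add: rtranclp_xstep_BInf)
  also have "(xstep L \<Psi>)\<^sup>*\<^sup>* \<dots> (PTimes r' X' Y)" using times.IH(1) by (rule rtranclp_xstep_cong)
  also have "(xstep L \<Psi>)\<^sup>*\<^sup>* \<dots> (PTimes r' X' Y')" using times.IH(2) by (rule rtranclp_xstep_cong)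
  finally show ?case .
qed

theorem confluentp_xstep: "wf_lang L \<Longrightarrow> confluentp (xstep L \<Psi>)"
  by (rule confluentp_if_diamond_between[where P = "xpar L \<Psi>"])
     (auto intro: xstep_xpar xpar_xstep xpar_xdev)

definition sconv :: "lang \<Rightarrow> sequent \<Rightarrow> sequent \<Rightarrow> bool" where
  "sconv L S S' \<longleftrightarrow>
     list_all2 (equivclp (fstep L)) (fst S) (fst S') \<and> list_all2 (equivclp (fstep L)) (snd S) (snd S')"

lemma sconv_refl [simp]: "sconv L S S"
  by (simp add: sconv_def list_all2_refl)

lemma sconv_sym: "sconv L S S' \<Longrightarrow> sconv L S' S"
  by (auto simp: sconv_def list_all2_conv_all_nth intro: equivclp_sym)

lemma sconv_trans:
  assumes "sconv L S S'" "sconv L S' S''"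
  shows "sconv L S S''"
proof -
  have trans: "list_all2 (equivclp (fstep L)) xs zs"
    if "list_all2 (equivclp (fstep L)) xs ys" "list_all2 (equivclp (fstep L)) ys zs" for xs ys zs
    by (rule list_all2_trans[OF equivclp_trans that])
  show ?thesis
    using assms trans[of "fst S" "fst S'" "fst S''"] trans[of "snd S" "snd S'" "snd S''"]
    by (simp add: sconv_def)
qed

definition samelen :: "sequent \<Rightarrow> sequent \<Rightarrow> bool" where
  "samelen S S' \<longleftrightarrow> length (fst S) = length (fst S') \<and> length (snd S) = length (snd S')"

lemma samelen_refl [simp]: "samelen S S"
  by (simp add: samelen_def)

lemma samelen_if_sconv: "sconv L S S' \<Longrightarrow> samelen S S'"
  by (auto simp: sconv_def samelen_def dest: list_all2_lengthD)

lemma sconv_if_seq_step: "seq_step L S S' \<Longrightarrow> sconv L S S'"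
  unfolding seq_step_def sconv_def
  by (auto simp: list_all2_refl elim!: list_all2_if_lstep)

lemma sconv_if_spar: "spar L S S' \<Longrightarrow> sconv L S S'"
  unfolding spar_def sconv_def
  by (auto elim!: list_all2_mono intro: rtranclp_into_equivclp fpar_fstep)

text \<open>Out-of-range indices hit the same junk element of equally long lists.\<close>
lemma nth_eq_beyond_length: "length xs = length ys \<Longrightarrow> length xs \<le> i \<Longrightarrow> xs ! i = ys ! i"
proof (induction xs arbitrary: ys i)
  case (Cons x xs)
  then obtain y ys' i' where "ys = y # ys'" "i = Suc i'" by (cases ys; cases i) auto
  with Cons.prems show ?case using Cons.IH[of ys' i'] by simp
qed simp

lemma list_all2_nth_equivclp:
  assumes "list_all2 (equivclp R) xs ys"
  shows "equivclp R (xs ! i) (ys ! i)"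
proof (cases "i < length xs")
  case False
  with assms have "xs ! i = ys ! i" by (intro nth_eq_beyond_length) (auto dest: list_all2_lengthD)
  then show ?thesis by simp
qed (use assms in \<open>simp add: list_all2_nthD\<close>)

lemma list_all2_nths: "list_all2 R xs ys \<Longrightarrow> list_all2 R (nths xs I) (nths ys I)"
proof (induction arbitrary: I rule: list_all2_induct)
  case (Cons x xs y ys)
  then show ?case using Cons.IH[of "{j. Suc j \<in> I}"] by (simp add: nths_Cons list_all2_appendI)
qed simp

lemma list_all2_ctx: "list_all2 R xs ys \<Longrightarrow> list_all2 R (ctx xs I) (ctx ys I)"
  unfolding ctx_def by (rule list_all2_nths)

lemma sconv_ucon: "sconv L S S' \<Longrightarrow> sconv L (ucon r S) (ucon r S')"
  by (cases r; cases S; cases S') (auto simp: sconv_def intro!: list_all2_appendI list_all2_ctx)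

lemma sconv_bcon: "sconv L S1 S1' \<Longrightarrow> sconv L S2 S2' \<Longrightarrow> sconv L (bcon r S1 S2) (bcon r S1' S2')"
  by (cases r; cases S1; cases S1'; cases S2; cases S2')
     (auto simp: sconv_def Let_def intro!: list_all2_appendI list_all2_ctx)

lemma sconv_ucon_main:
  "equivclp (fstep L) m m' \<Longrightarrow> sconv L (ucon (URule k ls rs m) S) (ucon (URule k ls rs m') S)"
  by (cases S) (auto simp: sconv_def list_all2_refl intro!: list_all2_appendI)

lemma sconv_bcon_main:
  "equivclp (fstep L) m m' \<Longrightarrow> sconv L (bcon (BRule k i j m) S1 S2) (bcon (BRule k i j m') S1 S2)"
  by (cases S1; cases S2) (auto simp: sconv_def Let_def list_all2_refl intro!: list_all2_appendI)

lemma sconv_unmarked: "sconv L S S' \<Longrightarrow> sconv L (unmarked S M) (unmarked S' M)"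
proof -
  assume conv: "sconv L S S'"
  then have "length (fst S') = length (fst S)" "length (snd S') = length (snd S)"
    by (auto simp: sconv_def dest: list_all2_lengthD)
  with conv show ?thesis
    unfolding unmarked_def sconv_def by (auto intro!: list_all2_map_same list_all2_nth_equivclp)
qed

lemma equivclp_xstep_cong:
  assumes "equivclp (xstep L \<Psi>) X X'"
  shows "equivclp (xstep L \<Psi>) (PUn r X) (PUn r X')" "equivclp (xstep L \<Psi>) (PW S X) (PW S X')"
    "equivclp (xstep L \<Psi>) (PPlus X Y) (PPlus X' Y)" "equivclp (xstep L \<Psi>) (PPlus Y X) (PPlus Y X')"
    "equivclp (xstep L \<Psi>) (PTimes b X Y) (PTimes b X' Y)"
    "equivclp (xstep L \<Psi>) (PTimes b Y X) (PTimes b Y X')"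
  by (intro equivclp_map[OF _ assms] xstep.intros; assumption)+

lemma equivclp_xstep_UInf:
  assumes "list_all2 (equivclp (fstep L)) As As'" "list_all2 (equivclp (fstep L)) Bs Bs'"
    and "equivclp (fstep L) m m'"
  shows "equivclp (xstep L \<Psi>) (PUn (UInf k As Bs m) X) (PUn (UInf k As' Bs' m') X)"
proof -
  have "equivclp (xstep L \<Psi>) (PUn (UInf k As Bs m) X) (PUn (UInf k As' Bs m) X)"
    using equivclp_map[of _ "xstep L \<Psi>" "\<lambda>x. PUn (UInf k x Bs m) X", OF xstep.un_l equivclp_lstep[OF assms(1)]] .
  also have "equivclp (xstep L \<Psi>) \<dots> (PUn (UInf k As' Bs' m) X)"
    using equivclp_map[of _ "xstep L \<Psi>" "\<lambda>x. PUn (UInf k As' x m) X", OF xstep.un_r equivclp_lstep[OF assms(2)]] .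
  also have "equivclp (xstep L \<Psi>) \<dots> (PUn (UInf k As' Bs' m') X)"
    using equivclp_map[of _ "xstep L \<Psi>" "\<lambda>x. PUn (UInf k As' Bs' x) X", OF xstep.un_m assms(3)] .
  finally show ?thesis .
qed

lemma equivclp_xstep_BInf:
  assumes "equivclp (fstep L) A A'" "equivclp (fstep L) B B'" "equivclp (fstep L) m m'"
  shows "equivclp (xstep L \<Psi>) (PTimes (BInf k A B m) X Y) (PTimes (BInf k A' B' m') X Y)"
proof -
  have "equivclp (xstep L \<Psi>) (PTimes (BInf k A B m) X Y) (PTimes (BInf k A' B m) X Y)"
    using equivclp_map[of _ "xstep L \<Psi>" "\<lambda>x. PTimes (BInf k x B m) X Y", OF xstep.times_1 assms(1)] .
  also have "equivclp (xstep L \<Psi>) \<dots> (PTimes (BInf k A' B' m) X Y)"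
    using equivclp_map[of _ "xstep L \<Psi>" "\<lambda>x. PTimes (BInf k A' x m) X Y", OF xstep.times_2 assms(2)] .
  also have "equivclp (xstep L \<Psi>) \<dots> (PTimes (BInf k A' B' m') X Y)"
    using equivclp_map[of _ "xstep L \<Psi>" "\<lambda>x. PTimes (BInf k A' B' x) X Y", OF xstep.times_m assms(3)] .
  finally show ?thesis .
qed

lemma equivclp_xstep_PW_seq: "sconv L S S' \<Longrightarrow> equivclp (xstep L \<Psi>) (PW S X) (PW S' X)"
proof -
  assume conv: "sconv L S S'"
  obtain G D G' D' where S: "S = (G, D)" "S' = (G', D')" by (cases S; cases S') auto
  have G: "equivclp (lstep (fstep L)) G G'" and D: "equivclp (lstep (fstep L)) D D'"
    using conv S by (auto simp: sconv_def intro: equivclp_lstep)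
  have "equivclp (seq_step L) (G, D) (G', D)"
    using equivclp_map[of "lstep (fstep L)" "seq_step L" "\<lambda>x. (x, D)"] G by (simp add: seq_step_def)
  also have "equivclp (seq_step L) (G', D) (G', D')"
    using equivclp_map[of "lstep (fstep L)" "seq_step L" "\<lambda>x. (G', x)"] D by (simp add: seq_step_def)
  finally have "equivclp (seq_step L) S S'" using S by simp
  from equivclp_map[of "seq_step L" "xstep L \<Psi>" "\<lambda>x. PW x X", OF xstep.w_seq this]
  show ?thesis by simp
qed

lemma equivclp_xstep_uinf_of:
  "sconv L S S' \<Longrightarrow> equivclp (xstep L \<Psi>) (PUn (uinf_of r S) X) (PUn (uinf_of r S') X)"
  by (cases r; cases S; cases S')
     (auto simp: sconv_def intro!: equivclp_xstep_UInf list_all2_map_same list_all2_nth_equivclp)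

lemma equivclp_xstep_binf_of:
  "sconv L S1 S1' \<Longrightarrow> sconv L S2 S2' \<Longrightarrow>
   equivclp (xstep L \<Psi>) (PTimes (binf_of r S1 S2) X Y) (PTimes (binf_of r S1' S2') X Y)"
  by (cases r; cases S1; cases S1'; cases S2; cases S2')
     (auto simp: sconv_def intro!: equivclp_xstep_BInf list_all2_nth_equivclp)

section \<open>Instances of proofs and their projection terms\<close>

lemma ctx_map: "ctx (map f G) ls = map f (ctx G ls)"
  by (simp add: ctx_def nths_map)

lemma concl_subst_p: "concl (subst_p \<sigma> p) = subst_seq \<sigma> (concl p)"
proof (induction p)
  case (Unary r p)
  then show ?case by (cases r; cases "concl p") (simp add: subst_ur_def subst_seq_def ctx_map)
next
  case (Binary r p q)
  then show ?case
    by (cases r; cases "concl p"; cases "concl q") (simp add: subst_br_def subst_seq_def ctx_map Let_def)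
qed (simp_all add: subst_seq_def)

lemma samelen_subst_seq [simp]: "samelen (subst_seq \<sigma> S) S"
  by (simp add: samelen_def subst_seq_def)

lemma premark_samelen: "samelen S S' \<Longrightarrow> premark d S M = premark d S' M"
  by (simp add: premark_def positions_def samelen_def)

lemma bdesc2_samelen: "samelen S S' \<Longrightarrow> bdesc2 r S = bdesc2 r S'"
proof (cases r; cases S; cases S'; rule ext)
  fix k i j m G D G' D' x
  assume "samelen S S'" "r = BRule k i j m" "S = (G, D)" "S' = (G', D')"
  then show "bdesc2 r S x = bdesc2 r S' x"
    by (cases x) (auto simp: samelen_def ctx_def length_nths)
qed

lemma unmarked_subst_seq: "unmarked (subst_seq \<sigma> S) M = subst_seq \<sigma> (unmarked S M)"
  by (auto simp: unmarked_def subst_seq_def)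

fun uranges :: "urule \<Rightarrow> sequent \<Rightarrow> bool" where
  "uranges (URule k ls rs m) (G, D) = ((\<forall>i\<in>set ls. i < length G) \<and> (\<forall>i\<in>set rs. i < length D))"

fun branges :: "brule \<Rightarrow> sequent \<Rightarrow> sequent \<Rightarrow> bool" where
  "branges (BRule k i j m) (G1, D1) (G2, D2) =
     (i < length (if a1_left k then G1 else D1) \<and> j < length (if a2_left k then G2 else D2))"

fun ranges :: "lkproof \<Rightarrow> bool" where
  "ranges (Ax A) = True"
| "ranges (Link b a as S) = True"
| "ranges (Unary r p) = (ranges p \<and> uranges r (concl p))"
| "ranges (Binary r p q) = (ranges p \<and> ranges q \<and> branges r (concl p) (concl q))"
| "ranges (ERule S p) = ranges p"

lemma uranges_if_urule_ok: "urule_ok L r S \<Longrightarrow> uranges r S"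
  by (cases r; cases S) (simp only: urule_ok.simps uranges.simps; blast)

lemma branges_if_brule_ok: "brule_ok L r S1 S2 \<Longrightarrow> branges r S1 S2"
  by (cases r; cases S1; cases S2) (simp only: brule_ok.simps branges.simps; blast)

lemma ranges_if_valid: "valid L \<Psi> ok p \<Longrightarrow> ranges p"
  by (induction p)
     (auto simp del: urule_ok.simps brule_ok.simps intro: uranges_if_urule_ok branges_if_brule_ok)

lemma uranges_samelen: "samelen S S' \<Longrightarrow> uranges r S = uranges r S'"
  by (cases r; cases S; cases S') (auto simp: samelen_def)

lemma branges_samelen: "samelen S1 S1' \<Longrightarrow> samelen S2 S2' \<Longrightarrow> branges r S1 S2 = branges r S1' S2'"
  by (cases r; cases S1; cases S1'; cases S2; cases S2') (auto simp: samelen_def)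

lemma uranges_subst_ur [simp]: "uranges (subst_ur \<sigma> r) S = uranges r S"
  by (cases r; cases S) (simp add: subst_ur_def)

lemma branges_subst_br [simp]: "branges (subst_br \<sigma> r) S1 S2 = branges r S1 S2"
  by (cases r; cases S1; cases S2) (simp add: subst_br_def)

lemma uinf_of_subst:
  "uranges r S \<Longrightarrow> uinf_of (subst_ur \<sigma> r) (subst_seq \<sigma> S) = subst_ui \<sigma> (uinf_of r S)"
  by (cases r; cases S) (auto simp: subst_ur_def subst_seq_def)

lemma binf_of_subst:
  "branges r S1 S2 \<Longrightarrow>
   binf_of (subst_br \<sigma> r) (subst_seq \<sigma> S1) (subst_seq \<sigma> S2) = subst_bi \<sigma> (binf_of r S1 S2)"
  by (cases r; cases S1; cases S2) (auto simp: subst_br_def subst_seq_def)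

lemma desc_main_irrelevant:
  "udesc (URule k ls rs m) = udesc (URule k ls rs m')"
  "bdesc1 (BRule k i j m) = bdesc1 (BRule k i j m')"
  "bdesc2 (BRule k i j m) = bdesc2 (BRule k i j m')"
  by (rule ext, rename_tac x, case_tac x, simp_all)+

lemma ukind_subst_ur [simp]: "ukind (subst_ur \<sigma> r) = ukind r"
  by (cases r) (simp add: subst_ur_def)

lemma udesc_subst_ur [simp]: "udesc (subst_ur \<sigma> r) = udesc r"
  by (cases r) (auto simp: subst_ur_def intro: desc_main_irrelevant)

lemma bkind_subst_br [simp]: "bkind (subst_br \<sigma> r) = bkind r"
  by (cases r) (simp add: subst_br_def)

lemma bdesc_subst_br [simp]: "bdesc1 (subst_br \<sigma> r) = bdesc1 r" "bdesc2 (subst_br \<sigma> r) = bdesc2 r"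
  by (cases r, auto simp: subst_br_def intro: desc_main_irrelevant)+

lemma xi_subst_p: "ranges p \<Longrightarrow> xi (subst_p \<sigma> p) M = subst_x \<sigma> (xi p M)"
proof (induction p arbitrary: M)
  case (Unary r p)
  then show ?case
    by (simp add: concl_subst_p premark_samelen[OF samelen_subst_seq] uinf_of_subst Let_def)
next
  case (Binary r p q)
  then show ?case
    by (simp add: concl_subst_p premark_samelen[OF samelen_subst_seq] bdesc2_samelen[OF samelen_subst_seq]
        binf_of_subst unmarked_subst_seq Let_def)
qed auto

section \<open>Evaluation steps of proofs are conversions of projection terms\<close>

definition schema_seq :: "schema \<Rightarrow> nat \<Rightarrow> trm \<Rightarrow> trm list \<Rightarrow> sequent" where
  "schema_seq \<Psi> b a as = subst_seq (mk_subst (cn (\<Psi> ! b) # cxs (\<Psi> ! b)) (a # as)) (cseq (\<Psi> ! b))"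

text \<open>The range conditions make sure that the auxiliary formulas recorded by \<open>xi\<close> are
  genuine list elements and not junk values of \<open>(!)\<close>.\<close>
fun eval_inv :: "lang \<Rightarrow> schema \<Rightarrow> lkproof \<Rightarrow> bool" where
  "eval_inv L \<Psi> (Ax A) = True"
| "eval_inv L \<Psi> (Link b a as S) =
     (b < length \<Psi> \<and> length as = length (cxs (\<Psi> ! b)) \<and> sconv L S (schema_seq \<Psi> b a as))"
| "eval_inv L \<Psi> (Unary r p) = (eval_inv L \<Psi> p \<and> uranges r (concl p))"
| "eval_inv L \<Psi> (Binary r p q) = (eval_inv L \<Psi> p \<and> eval_inv L \<Psi> q \<and> branges r (concl p) (concl q))"
| "eval_inv L \<Psi> (ERule S p) = eval_inv L \<Psi> p"

lemma comp_ok_if_schema: "is_schema L \<Psi> \<Longrightarrow> b < length \<Psi> \<Longrightarrow> comp_ok L \<Psi> b (\<Psi> ! b)"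
  by (simp add: is_schema_def)

lemma schema_seq_subst:
  assumes "fv_seq (cseq (\<Psi> ! b)) \<subseteq> set (cn (\<Psi> ! b) # cxs (\<Psi> ! b))" "length as = length (cxs (\<Psi> ! b))"
  shows "subst_seq \<sigma> (schema_seq \<Psi> b a as) = schema_seq \<Psi> b (subst_t \<sigma> a) (map (subst_t \<sigma>) as)"
  unfolding schema_seq_def
  by (rule subst_seq_subst_seq_cong) (use assms subst_mk_subst[of "cn (\<Psi> ! b) # cxs (\<Psi> ! b)" "a # as"] in auto)

lemma sconv_schema_seq_tpar:
  assumes "wf_lang L" "list_all2 (tpar L) (a # as) (a' # as')"
  shows "sconv L (schema_seq \<Psi> b a as) (schema_seq \<Psi> b a' as')"
proof -
  have "spar L (schema_seq \<Psi> b a as) (schema_seq \<Psi> b a' as')"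
    unfolding schema_seq_def spar_def subst_seq_def
    using assms by (auto intro!: list_fpar_subst tpar_mk_subst)
  then show ?thesis by (rule sconv_if_spar)
qed

lemma concl_base_instance:
  assumes "comp_ok L \<Psi> b (\<Psi> ! b)"
  shows "concl (subst_p (mk_subst (cxs (\<Psi> ! b)) as) (cpi (\<Psi> ! b))) = schema_seq \<Psi> b Zero as"
  using assms unfolding comp_ok_def concl_subst_p schema_seq_def
  by (auto intro!: subst_seq_subst_seq_cong simp: mk_subst_Cons mk_subst_Nil)

lemma concl_step_instance:
  assumes "comp_ok L \<Psi> b (\<Psi> ! b)"
  shows "concl (subst_p (mk_subst (ck (\<Psi> ! b) # cxs (\<Psi> ! b)) (t # as)) (cnu (\<Psi> ! b)))
    = schema_seq \<Psi> b (Sc t) as"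
proof -
  let ?c = "\<Psi> ! b"
  have "subst_t (mk_subst (ck ?c # cxs ?c) (t # as)) (mk_subst [cn ?c] [Sc (Fr (ck ?c))] v) =
      mk_subst (cn ?c # cxs ?c) (Sc t # as) v" if "v \<in> fv_seq (cseq ?c)" for v
  proof (cases "v = cn ?c")
    case False
    with that assms have "v \<in> set (cxs ?c)" "v \<noteq> ck ?c" by (auto simp: comp_ok_def)
    with False show ?thesis by (simp add: mk_subst_Cons mk_subst_Nil)
  qed (simp add: mk_subst_Cons)
  then show ?thesis
    using assms unfolding comp_ok_def concl_subst_p schema_seq_def
    by (auto intro!: subst_seq_subst_seq_cong)
qed

lemma eval_inv_subst_valid: "is_schema L \<Psi> \<Longrightarrow> valid L \<Psi> ok p \<Longrightarrow> eval_inv L \<Psi> (subst_p \<sigma> p)"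
proof (induction p)
  case (Link b a as S)
  then have b: "b < length \<Psi>" and S: "S = schema_seq \<Psi> b a as"
    and "map (sort_of L []) as = map (Some \<circ> snd) (cxs (\<Psi> ! b))"
    by (auto simp: link_ok_def schema_seq_def)
  then have "length as = length (cxs (\<Psi> ! b))" by (metis length_map)
  moreover have "fv_seq (cseq (\<Psi> ! b)) \<subseteq> set (cn (\<Psi> ! b) # cxs (\<Psi> ! b))"
    using comp_ok_if_schema[OF Link.prems(1) b] by (simp add: comp_ok_def)
  ultimately show ?case using b S schema_seq_subst by simp
next
  case (Unary r p)
  then show ?case
    by (auto simp: concl_subst_p uranges_samelen[OF samelen_subst_seq] simp del: urule_ok.simps
        intro: uranges_if_urule_ok)
next
  case (Binary r p q)
  then show ?case
    by (auto simp: concl_subst_p branges_samelen[OF samelen_subst_seq samelen_subst_seq]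
        simp del: brule_ok.simps intro: branges_if_brule_ok)
qed simp_all

lemma wf_lang_if_schema: "is_schema L \<Psi> \<Longrightarrow> wf_lang L"
  by (simp add: is_schema_def)

lemma pstep_preserves_eval_inv:
  "pstep L \<Psi> p p' \<Longrightarrow> is_schema L \<Psi> \<Longrightarrow> eval_inv L \<Psi> p \<Longrightarrow>
   eval_inv L \<Psi> p' \<and> sconv L (concl p) (concl p')"
proof (induction rule: pstep.induct)
  case (link_a a a' b as S)
  then have "sconv L (schema_seq \<Psi> b a as) (schema_seq \<Psi> b a' as)"
    by (auto intro!: sconv_schema_seq_tpar wf_lang_if_schema tstep_tpar)
  with link_a.prems show ?case by (auto intro: sconv_trans)
next
  case (link_as as as' b a S)
  then have "sconv L (schema_seq \<Psi> b a as) (schema_seq \<Psi> b a as')"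
    by (intro sconv_schema_seq_tpar wf_lang_if_schema) (simp_all add: list_tpar_if_lstep)
  with link_as show ?case by (auto intro: sconv_trans dest: lstep_length)
next
  case (link_S S S' b a as)
  then have "sconv L S S'" by (intro sconv_if_seq_step)
  with link_S.prems show ?case by (auto intro: sconv_trans sconv_sym)
next
  case (link_0 b as S)
  with comp_ok_if_schema[OF link_0.prems(1) link_0.hyps(1)] show ?case
    by (auto simp: concl_base_instance comp_ok_def intro: eval_inv_subst_valid)
next
  case (link_S' b as t S)
  with comp_ok_if_schema[OF link_S'.prems(1) link_S'.hyps(1)] show ?case
    by (auto simp: concl_step_instance comp_ok_def intro: eval_inv_subst_valid)
next
  case (u_rule m m' k ls rs p)
  have "sconv L (ucon (URule k ls rs m) (concl p)) (ucon (URule k ls rs m') (concl p))"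
    using u_rule.hyps by (intro sconv_ucon_main) auto
  with u_rule.prems show ?case by (cases "concl p") simp
next
  case (u_sub p p' r)
  then show ?case by (auto simp: uranges_samelen[OF samelen_if_sconv] intro: sconv_ucon)
next
  case (b_rule m m' k i j p q)
  have "sconv L (bcon (BRule k i j m) (concl p) (concl q)) (bcon (BRule k i j m') (concl p) (concl q))"
    using b_rule.hyps by (intro sconv_bcon_main) auto
  with b_rule.prems show ?case by (cases "concl p"; cases "concl q") simp
next
  case (b_sub1 p p' r q)
  then show ?case
    by (auto simp: branges_samelen[OF samelen_if_sconv samelen_refl] intro: sconv_bcon)
next
  case (b_sub2 q q' r p)
  then show ?case
    by (auto simp: branges_samelen[OF samelen_refl samelen_if_sconv] intro: sconv_bcon)
next
  case (e_seq S S' p)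
  then show ?case by (auto intro: sconv_if_seq_step)
qed (auto simp: sconv_def)

lemma xi_Unary_cong:
  assumes conv: "sconv L (concl p) (concl p')"
    and xi_conv: "\<And>M. equivclp (xstep L \<Psi>) (xi p M) (xi p' M)"
  shows "equivclp (xstep L \<Psi>) (xi (Unary r p) M) (xi (Unary r p') M)"
proof -
  define M' where "M' = premark (udesc r) (concl p) M"
  have M': "premark (udesc r) (concl p') M = M'"
    using premark_samelen[OF samelen_if_sconv[OF conv]] by (simp add: M'_def)
  have "equivclp (xstep L \<Psi>) (PUn (uinf_of r (concl p)) (xi p M')) (PUn (uinf_of r (concl p)) (xi p' M'))"
    by (rule equivclp_xstep_cong(1)[OF xi_conv])
  also have "equivclp (xstep L \<Psi>) \<dots> (PUn (uinf_of r (concl p')) (xi p' M'))"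
    by (rule equivclp_xstep_uinf_of[OF conv])
  finally show ?thesis
    using xi_conv by (simp add: Let_def M'_def[symmetric] M')
qed

lemma xi_Binary_cong1:
  assumes conv: "sconv L (concl p) (concl p')"
    and xi_conv: "\<And>M. equivclp (xstep L \<Psi>) (xi p M) (xi p' M)"
  shows "equivclp (xstep L \<Psi>) (xi (Binary r p q) M) (xi (Binary r p' q) M)"
proof -
  define M1 where "M1 = premark (bdesc1 r) (concl p) M"
  define M2 where "M2 = premark (bdesc2 r (concl p)) (concl q) M"
  have sl: "samelen (concl p) (concl p')" using conv by (rule samelen_if_sconv)
  have M1: "premark (bdesc1 r) (concl p') M = M1"
    using premark_samelen[OF sl] by (simp add: M1_def)
  have M2: "premark (bdesc2 r (concl p')) (concl q) M = M2"
    using bdesc2_samelen[OF sl] by (simp add: M2_def)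
  have "equivclp (xstep L \<Psi>) (PPlus (PW (unmarked (concl q) M2) (xi p M1)) (PW (unmarked (concl p) M1) (xi q M2)))
      (PPlus (PW (unmarked (concl q) M2) (xi p' M1)) (PW (unmarked (concl p) M1) (xi q M2)))"
    by (intro equivclp_xstep_cong xi_conv)
  also have "equivclp (xstep L \<Psi>) \<dots>
      (PPlus (PW (unmarked (concl q) M2) (xi p' M1)) (PW (unmarked (concl p') M1) (xi q M2)))"
    by (intro equivclp_xstep_cong equivclp_xstep_PW_seq sconv_unmarked conv)
  moreover have "equivclp (xstep L \<Psi>) (PTimes (binf_of r (concl p) (concl q)) (xi p M1) (xi q M2))
      (PTimes (binf_of r (concl p) (concl q)) (xi p' M1) (xi q M2))"
    by (intro equivclp_xstep_cong xi_conv)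
  moreover have "equivclp (xstep L \<Psi>) \<dots> (PTimes (binf_of r (concl p') (concl q)) (xi p' M1) (xi q M2))"
    by (intro equivclp_xstep_binf_of conv sconv_refl)
  ultimately show ?thesis
    by (simp add: Let_def M1_def[symmetric] M2_def[symmetric] M1 M2) (blast intro: equivclp_trans)
qed

lemma xi_Binary_cong2:
  assumes conv: "sconv L (concl q) (concl q')"
    and xi_conv: "\<And>M. equivclp (xstep L \<Psi>) (xi q M) (xi q' M)"
  shows "equivclp (xstep L \<Psi>) (xi (Binary r p q) M) (xi (Binary r p q') M)"
proof -
  define M1 where "M1 = premark (bdesc1 r) (concl p) M"
  define M2 where "M2 = premark (bdesc2 r (concl p)) (concl q) M"
  have M2: "premark (bdesc2 r (concl p)) (concl q') M = M2"
    using premark_samelen[OF samelen_if_sconv[OF conv]] by (simp add: M2_def)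
  have "equivclp (xstep L \<Psi>) (PPlus (PW (unmarked (concl q) M2) (xi p M1)) (PW (unmarked (concl p) M1) (xi q M2)))
      (PPlus (PW (unmarked (concl q') M2) (xi p M1)) (PW (unmarked (concl p) M1) (xi q M2)))"
    by (intro equivclp_xstep_cong equivclp_xstep_PW_seq sconv_unmarked conv)
  also have "equivclp (xstep L \<Psi>) \<dots>
      (PPlus (PW (unmarked (concl q') M2) (xi p M1)) (PW (unmarked (concl p) M1) (xi q' M2)))"
    by (intro equivclp_xstep_cong xi_conv)
  moreover have "equivclp (xstep L \<Psi>) (PTimes (binf_of r (concl p) (concl q)) (xi p M1) (xi q M2))
      (PTimes (binf_of r (concl p) (concl q)) (xi p M1) (xi q' M2))"
    by (intro equivclp_xstep_cong xi_conv)
  moreover have "equivclp (xstep L \<Psi>) \<dots> (PTimes (binf_of r (concl p) (concl q')) (xi p M1) (xi q' M2))"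
    by (intro equivclp_xstep_binf_of conv sconv_refl)
  ultimately show ?thesis
    by (simp add: Let_def M1_def[symmetric] M2_def[symmetric] M2) (blast intro: equivclp_trans)
qed

lemma xi_Unary_main_fstep:
  "fstep L m m' \<Longrightarrow>
   equivclp (xstep L \<Psi>) (xi (Unary (URule k ls rs m) p) M) (xi (Unary (URule k ls rs m') p) M)"
  by (cases "concl p") (auto simp: Let_def desc_main_irrelevant(1)[of k ls rs m m'] intro: xstep.un_m)

lemma xi_Binary_main_fstep:
  "fstep L m m' \<Longrightarrow>
   equivclp (xstep L \<Psi>) (xi (Binary (BRule k i j m) p q) M) (xi (Binary (BRule k i j m') p q) M)"
  by (cases "concl p"; cases "concl q")
     (auto simp: Let_def desc_main_irrelevant(2,3)[of k i j m m'] intro: xstep.times_m)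

lemma pstep_xi_equivclp:
  "pstep L \<Psi> p p' \<Longrightarrow> is_schema L \<Psi> \<Longrightarrow> eval_inv L \<Psi> p \<Longrightarrow>
   equivclp (xstep L \<Psi>) (xi p M) (xi p' M)"
proof (induction arbitrary: M rule: pstep.induct)
  case (link_0 b as S)
  then have "ranges (cpi (\<Psi> ! b))"
    using comp_ok_if_schema[OF link_0.prems(1) link_0.hyps(1)] by (auto simp: comp_ok_def intro: ranges_if_valid)
  with link_0 show ?case by (auto simp: xi_subst_p intro: xstep.pr_0)
next
  case (link_S' b as t S)
  then have "ranges (cnu (\<Psi> ! b))"
    using comp_ok_if_schema[OF link_S'.prems(1) link_S'.hyps(1)] by (auto simp: comp_ok_def intro: ranges_if_valid)
  with link_S' show ?case by (auto simp: xi_subst_p intro: xstep.pr_S)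
next
  case (u_sub p p' r)
  then have "sconv L (concl p) (concl p')" using pstep_preserves_eval_inv by simp
  then show ?case by (rule xi_Unary_cong) (use u_sub in simp)
next
  case (b_sub1 p p' r q)
  then have "sconv L (concl p) (concl p')" using pstep_preserves_eval_inv by simp
  then show ?case by (rule xi_Binary_cong1) (use b_sub1 in simp)
next
  case (b_sub2 q q' r p)
  then have "sconv L (concl q) (concl q')" using pstep_preserves_eval_inv by simp
  then show ?case by (rule xi_Binary_cong2) (use b_sub2 in simp)
next
  case (u_rule m m' k ls rs p)
  from u_rule.hyps show ?case by (rule xi_Unary_main_fstep)
next
  case (b_rule m m' k i j p q)
  from b_rule.hyps show ?case by (rule xi_Binary_main_fstep)
qed (auto intro: xstep.intros)

lemma eval_inv_start_link: "is_schema L \<Psi> \<Longrightarrow> eval_inv L \<Psi> (start_link \<Psi> \<gamma>)"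
proof -
  assume "is_schema L \<Psi>"
  then have "\<Psi> \<noteq> []" by (simp add: is_schema_def)
  moreover have "subst_seq (mk_subst [cn (\<Psi> ! 0)] [num_t \<gamma>]) (cseq (\<Psi> ! 0)) =
      schema_seq \<Psi> 0 (num_t \<gamma>) (map Fr (cxs (\<Psi> ! 0)))"
    unfolding schema_seq_def
    by (rule subst_seq_cong) (auto simp: mk_subst_Cons mk_subst_Nil mk_subst_self)
  ultimately show ?thesis by (simp add: start_link_def hd_conv_nth)
qed

lemma schema_eval_xi_equivclp:
  assumes "(pstep L \<Psi>)\<^sup>*\<^sup>* (start_link \<Psi> \<gamma>) P" and "is_schema L \<Psi>"
  shows "eval_inv L \<Psi> P \<and> equivclp (xstep L \<Psi>) (start_pr \<Psi> \<gamma>) (xi P {})"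
  using assms(1)
proof (induction rule: rtranclp_induct)
  case base
  then show ?case using eval_inv_start_link[OF assms(2)] by (simp add: start_link_def start_pr_def)
next
  case (step p p')
  then show ?case
    using pstep_preserves_eval_inv pstep_xi_equivclp assms(2) by (blast intro: equivclp_trans)
qed

section \<open>Projection terms of normal proofs are normal\<close>

fun dfree_ui :: "uinf \<Rightarrow> bool" where
  "dfree_ui (UInf k As Bs m) =
     ((\<forall>A\<in>set As. dsyms_f A = {}) \<and> (\<forall>A\<in>set Bs. dsyms_f A = {}) \<and> dsyms_f m = {})"

fun dfree_bi :: "binf \<Rightarrow> bool" where
  "dfree_bi (BInf k A B m) = (dsyms_f A = {} \<and> dsyms_f B = {} \<and> dsyms_f m = {})"

primrec dfree_x :: "pterm \<Rightarrow> bool" where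
  "dfree_x (PAx A) = (dsyms_f A = {})"
| "dfree_x (Pr b M a as) = False"
| "dfree_x (PUn r X) = (dfree_ui r \<and> dfree_x X)"
| "dfree_x (PW S X) = (dsyms_seq S = {} \<and> dfree_x X)"
| "dfree_x (PPlus X Y) = (dfree_x X \<and> dfree_x Y)"
| "dfree_x (PTimes r X Y) = (dfree_bi r \<and> dfree_x X \<and> dfree_x Y)"

lemma tstep_dsyms: "tstep L t t' \<Longrightarrow> dsyms_t t \<noteq> {}"
  by (induction rule: tstep.induct) auto

lemma lstep_dsyms: "lstep R xs ys \<Longrightarrow> (\<And>x y. R x y \<Longrightarrow> d x \<noteq> {}) \<Longrightarrow> \<exists>x\<in>set xs. d x \<noteq> {}"
  unfolding lstep_def by fastforce

lemma fstep_dsyms: "fstep L A A' \<Longrightarrow> dsyms_f A \<noteq> {}"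
proof (induction rule: fstep.induct)
  case (arg us us' P)
  then show ?case using lstep_dsyms[of "tstep L" us us' dsyms_t] tstep_dsyms by fastforce
qed auto

lemma seq_step_dsyms: "seq_step L S S' \<Longrightarrow> dsyms_seq S \<noteq> {}"
  unfolding seq_step_def dsyms_seq_def using lstep_dsyms[of "fstep L" _ _ dsyms_f] fstep_dsyms by fastforce

lemma xstep_normal_if_dfree_x: "dfree_x X \<Longrightarrow> \<not> xstep L \<Psi> X Y"
proof
  assume "xstep L \<Psi> X Y" "dfree_x X"
  then show False
    by (induction rule: xstep.induct)
       (fastforce dest: fstep_dsyms seq_step_dsyms lstep_dsyms[of "fstep L" _ _ dsyms_f])+
qed

lemma set_ctx: "set (ctx G ls) \<subseteq> set G"
  by (simp add: ctx_def set_nths_subset)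

lemma dsyms_concl: "dfree_p p \<Longrightarrow> dsyms_seq (concl p) = {}"
proof (induction p)
  case (Unary r p)
  obtain k ls rs m where r: "r = URule k ls rs m" by (cases r)
  obtain G D where cp: "concl p = (G, D)" by (cases "concl p")
  from Unary cp have "\<forall>A\<in>set G \<union> set D. dsyms_f A = {}" by (auto simp: dsyms_seq_def)
  with Unary.prems r cp set_ctx[of G ls] set_ctx[of D rs] show ?case
    by (auto simp: dsyms_seq_def)
next
  case (Binary r p q)
  obtain k i j m where r: "r = BRule k i j m" by (cases r)
  obtain G1 D1 G2 D2 where cp: "concl p = (G1, D1)" "concl q = (G2, D2)"
    by (cases "concl p"; cases "concl q")
  from Binary cp have "\<forall>A\<in>set G1 \<union> set D1 \<union> set G2 \<union> set D2. dsyms_f A = {}"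
    by (auto simp: dsyms_seq_def)
  with Binary.prems r cp set_ctx[of G1 "[i]"] set_ctx[of D1 "[i]"] set_ctx[of G2 "[j]"]
    set_ctx[of D2 "[j]"] show ?case
    by (auto simp: dsyms_seq_def Let_def)
qed (auto simp: dsyms_seq_def)

lemma dfree_x_xi: "nolinks p \<Longrightarrow> dfree_p p \<Longrightarrow> eval_inv L \<Psi> p \<Longrightarrow> dfree_x (xi p M)"
proof (induction p arbitrary: M)
  case (Unary r p)
  then have "dfree_ui (uinf_of r (concl p))"
    using dsyms_concl[of p] by (cases r; cases "concl p") (auto simp: dsyms_seq_def)
  with Unary show ?case by (simp add: Let_def)
next
  case (Binary r p q)
  then have "dfree_bi (binf_of r (concl p) (concl q))"
    using dsyms_concl[of p] dsyms_concl[of q]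
    by (cases r; cases "concl p"; cases "concl q") (auto simp: dsyms_seq_def)
  moreover have "dsyms_seq (unmarked (concl p) M') = {}" "dsyms_seq (unmarked (concl q) M') = {}" for M'
    using Binary.prems dsyms_concl[of p] dsyms_concl[of q] by (auto simp: dsyms_seq_def unmarked_def)
  ultimately show ?case using Binary by (simp add: Let_def)
qed simp_all

theorem mainTheorem11:
  fixes L :: lang and \<Psi> :: schema and \<gamma> :: nat and P :: lkproof and X :: pterm
  assumes "is_schema L \<Psi>"
    and "schema_eval L \<Psi> \<gamma> P"
    and "proj_eval L \<Psi> \<gamma> X"
  shows "PR P = evalp X"
proof -
  from assms(2) have "(pstep L \<Psi>)\<^sup>*\<^sup>* (start_link \<Psi> \<gamma>) P" and normal: "nolinks P" "dfree_p P"
    by (auto simp: schema_eval_def normal_proof_def)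
  with assms(1) have inv: "eval_inv L \<Psi> P"
    and start_xi: "equivclp (xstep L \<Psi>) (start_pr \<Psi> \<gamma>) (xi P {})"
    using schema_eval_xi_equivclp by blast+
  from normal inv have xi_normal: "\<not> (\<exists>Y. xstep L \<Psi> (xi P {}) Y)"
    using dfree_x_xi xstep_normal_if_dfree_x by blast
  from assms(3) have X_start: "equivclp (xstep L \<Psi>) X (start_pr \<Psi> \<gamma>)"
    and X_normal: "\<not> (\<exists>Y. xstep L \<Psi> X Y)"
    by (auto simp: proj_eval_def intro: converse_rtranclp_into_equivclp)
  have "X = xi P {}"
    using confluentp_xstep[OF wf_lang_if_schema[OF assms(1)]] equivclp_trans[OF X_start start_xi]
      X_normal xi_normal by (rule equivclp_normal_forms_eq)
  then show ?thesis by (simp add: PR_def)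
qed

end
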